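(* In the grouped model, for every $I\in\mathcal I$ and every $k=1,\dots,K$, $\hat H_{nk}(I)\to H_{0k}(I)$ and $\tilde H_{nk}(I)\to H_{0k}(I)$ almost surely as $n\to\infty$, where $\hat H_n$ is any maximum likelihood estimator and $\tilde H_n$ any naive estimator.
   Context: Setting (grouped model): $K\ge1$ fixed; $(X,Y)$ random with $X\in\mathbb R$, $Y\in\{1,\dots,K\}$; $F_{0k}(t)=P(X\le t,Y=k)$. $C$ is independent of $(X,Y)$ with distribution $G$; $G(I)=\int_{c\in I}dG(c)$. $\mathcal I$ is a countable set of mutually disjoint intervals with $G(I)>0$ for all $I\in\mathcal I$ (and $G(\bigcup_{I\in\mathcal I}I)=1$); $m(I)\in I$ is a chosen point, distinct for distinct intervals, $\mathcal M=\{m(I):I\in\mathcal I\}$, and $I(m)$ is the interval with $m(I(m))=m$. Observed data: $(D,\Delta)$ with $D=\sum_{I}m(I)1\{C\in I\}$, $\Delta_k=1\{X\le C,Y=k\}$ ($k\le K$), $\Delta_{K+1}=1\{X>C\}$; $n$ i.i.d. copies $(D_i,\Delta^i)$. Define $H_{0k}(I)=G(I)^{-1}\int_{c\in I}F_{0k}(c)dG(c)$, $k=1,\dots,K$. $\mathcal H_K$ is the set of $K$-tuples $H=(H_1,\dots,H_K)$ of functions on $\mathcal I$ that are nonnegative, nondecreasing in the order of $m(I)$, and satisfy $H_+(I)=\sum_{k\le K}H_k(I)\le1$; set $H_{K+1}=1-H_+$. Let $M_k(I)=\frac1n\sum_i\Delta_k^i1\{D_i=m(I)\}$ ($k=1,\dots,K+1$),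 $M(I)=\sum_{k=1}^{K+1}M_k(I)$. The maximum likelihood estimator $\hat H_n$ is any maximizer over $\mathcal H_K$ of $l_n^{\rm group}(H)=\sum_{I\in\mathcal I}\sum_{k=1}^{K+1}M_k(I)\log H_k(I)$ (convention $0\log0=0$). The naive estimator $\tilde H_n$ has $k$th component any maximizer over $\mathcal H_1$ (the case $K=1$) of $l_{nk}^{\rm group}(H_k)=\sum_{I\in\mathcal I}[M_k(I)\log H_k(I)+\{M(I)-M_k(I)\}\log\{1-H_k(I)\}]$. *)

theory Defs
  imports "HOL-Probability.Probability"
begin

text \<open>Intervals are represented
as sets of reals (II is the collection of intervals), m is the chosen-point map,
risk indices are k = 1..K, and index K+1 is the survival ("no failure") category.\<close>

text \<open>Observed group point: D = sum over I of m(I) 1{C in I}; since the intervals are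
disjoint, at most one summand is nonzero.\<close>
definition grp_D :: "real set set \<Rightarrow> (real set \<Rightarrow> real) \<Rightarrow> real \<Rightarrow> real" where
  "grp_D II m c = (if \<exists>I\<in>II. c \<in> I then m (THE I. I \<in> II \<and> c \<in> I) else 0)"

definition grp_Delta :: "nat \<Rightarrow> nat \<Rightarrow> real \<Rightarrow> nat \<Rightarrow> real \<Rightarrow> real" where
  "grp_Delta K k x y c =
     (if k = K + 1 then (if x > c then 1 else 0)
      else (if x \<le> c \<and> y = k then 1 else 0))"

definition grp_M :: "nat \<Rightarrow> real set set \<Rightarrow> (real set \<Rightarrow> real) \<Rightarrow> (nat \<Rightarrow> 'a \<Rightarrow> real)
    \<Rightarrow> (nat \<Rightarrow> 'a \<Rightarrow> nat) \<Rightarrow> (nat \<Rightarrow> 'a \<Rightarrow> real) \<Rightarrow> nat \<Rightarrow> nat \<Rightarrow> 'a \<Rightarrow> real set \<Rightarrow> real" where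
  "grp_M K II m X Y C k n \<omega> I =
     (1 / real n) * (\<Sum>i<n. grp_Delta K k (X i \<omega>) (Y i \<omega>) (C i \<omega>) *
                             (if grp_D II m (C i \<omega>) = m I then 1 else 0))"

definition grp_Mtot :: "nat \<Rightarrow> real set set \<Rightarrow> (real set \<Rightarrow> real) \<Rightarrow> (nat \<Rightarrow> 'a \<Rightarrow> real)
    \<Rightarrow> (nat \<Rightarrow> 'a \<Rightarrow> nat) \<Rightarrow> (nat \<Rightarrow> 'a \<Rightarrow> real) \<Rightarrow> nat \<Rightarrow> 'a \<Rightarrow> real set \<Rightarrow> real" where
  "grp_Mtot K II m X Y C n \<omega> I = (\<Sum>k=1..K+1. grp_M K II m X Y C k n \<omega> I)"

definition grp_class :: "nat \<Rightarrow> real set set \<Rightarrow> (real set \<Rightarrow> real) \<Rightarrow> (nat \<Rightarrow> real set \<Rightarrow> real) set" where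
  "grp_class K II m = {H.
      (\<forall>k\<in>{1..K}. \<forall>I\<in>II. 0 \<le> H k I) \<and>
      (\<forall>k\<in>{1..K}. \<forall>I\<in>II. \<forall>J\<in>II. m I \<le> m J \<longrightarrow> H k I \<le> H k J) \<and>
      (\<forall>I\<in>II. (\<Sum>k=1..K. H k I) \<le> 1)}"

definition grp_Hext :: "nat \<Rightarrow> (nat \<Rightarrow> real set \<Rightarrow> real) \<Rightarrow> nat \<Rightarrow> real set \<Rightarrow> real" where
  "grp_Hext K H k I = (if k = K + 1 then 1 - (\<Sum>j=1..K. H j I) else H k I)"

definition xlog :: "real \<Rightarrow> real \<Rightarrow> ereal" where
  "xlog a b = (if a = 0 then 0 else if b = 0 then -\<infinity> else ereal (a * ln b))"

text \<open>Log-likelihood. Terms with M(I) = 0 vanish, so the sum over II equals the (finite)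
sum over those I with M(I) \<noteq> 0.\<close>
definition grp_loglik :: "nat \<Rightarrow> real set set \<Rightarrow> (real set \<Rightarrow> real) \<Rightarrow> (nat \<Rightarrow> 'a \<Rightarrow> real)
    \<Rightarrow> (nat \<Rightarrow> 'a \<Rightarrow> nat) \<Rightarrow> (nat \<Rightarrow> 'a \<Rightarrow> real) \<Rightarrow> nat \<Rightarrow> 'a \<Rightarrow> (nat \<Rightarrow> real set \<Rightarrow> real) \<Rightarrow> ereal" where
  "grp_loglik K II m X Y C n \<omega> H =
     (\<Sum>I\<in>{I\<in>II. grp_Mtot K II m X Y C n \<omega> I \<noteq> 0}.
        \<Sum>k=1..K+1. xlog (grp_M K II m X Y C k n \<omega> I) (grp_Hext K H k I))"

definition grp_loglik_naive :: "nat \<Rightarrow> real set set \<Rightarrow> (real set \<Rightarrow> real) \<Rightarrow> (nat \<Rightarrow> 'a \<Rightarrow> real)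
    \<Rightarrow> (nat \<Rightarrow> 'a \<Rightarrow> nat) \<Rightarrow> (nat \<Rightarrow> 'a \<Rightarrow> real) \<Rightarrow> nat \<Rightarrow> nat \<Rightarrow> 'a \<Rightarrow> (real set \<Rightarrow> real) \<Rightarrow> ereal" where
  "grp_loglik_naive K II m X Y C k n \<omega> h =
     (\<Sum>I\<in>{I\<in>II. grp_Mtot K II m X Y C n \<omega> I \<noteq> 0}.
        xlog (grp_M K II m X Y C k n \<omega> I) (h I) +
        xlog (grp_Mtot K II m X Y C n \<omega> I - grp_M K II m X Y C k n \<omega> I) (1 - h I))"

definition grp_F0 :: "'a measure \<Rightarrow> ('a \<Rightarrow> real) \<Rightarrow> ('a \<Rightarrow> nat) \<Rightarrow> nat \<Rightarrow> real \<Rightarrow> real" where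
  "grp_F0 P X Y k t = measure P {\<omega> \<in> space P. X \<omega> \<le> t \<and> Y \<omega> = k}"

definition grp_H0 :: "'a measure \<Rightarrow> ('a \<Rightarrow> real) \<Rightarrow> ('a \<Rightarrow> nat) \<Rightarrow> real measure \<Rightarrow> nat \<Rightarrow> real set \<Rightarrow> real" where
  "grp_H0 P X Y G k I = (LINT c:I|G. grp_F0 P X Y k c) / measure G I"

end

theory Submission
  imports Defs
begin

(* The proof separates probability from analysis.
   (1) Probability: by Hoeffding's inequality and Borel-Cantelli, averages of i.i.d. [0,1]-valued
       variables converge almost surely.  Applied to the observations this shows that, almost
       surely, every cell frequency M_k(I) tends to G(I) H_0k(I) and M(I) tends to G(I).
   (2) Analysis (locale cell_fit): consider cells I with weights g(I) > 0 summing to one and,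
       inside each cell, categories k with true probabilities q(I,k).  If observed frequencies
       converge to g(I) q(I,k) and fitted probabilities p_n(I,.) have a likelihood at least that
       of every mixture (1-e) q + e/N, then p_n(I,k) tends to q(I,k).  The argument combines
       ln x <= 2 (sqrt x - 1) with a truncation to finitely many cells and shows that the squared
       Hellinger distance between q(I,.) and p_n(I,.) tends to zero.
   (3) Along every sample path of (1), the MLE (with K+1 categories per interval, including
       survival) and each naive estimator (with two categories: failure of type k or not) satisfy
       the hypotheses of (2), because the class H_K contains the mixtures of H_0 with the
       uniform distribution. *)

lemma AE_tendsto_if_AE_eventually_close:
  fixes s :: "nat \<Rightarrow> 'a \<Rightarrow> real"
  assumes close: "\<And>e. 0 < e \<Longrightarrow> AE \<omega> in M. eventually (\<lambda>n. \<bar>s n \<omega> - p\<bar> < e) sequentially"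
  shows "AE \<omega> in M. (\<lambda>n. s n \<omega>) \<longlonglongrightarrow> p"
proof -
  have "AE \<omega> in M. \<forall>j::nat. eventually (\<lambda>n. \<bar>s n \<omega> - p\<bar> < inverse (real (Suc j))) sequentially"
    unfolding AE_all_countable by (intro allI close) simp
  then show ?thesis
  proof (rule AE_mp, intro AE_I2 impI)
    fix \<omega> assume close_\<omega>: "\<forall>j::nat. eventually (\<lambda>n. \<bar>s n \<omega> - p\<bar> < inverse (real (Suc j))) sequentially"
    show "(\<lambda>n. s n \<omega>) \<longlonglongrightarrow> p"
    proof (rule order_tendstoI)
      fix r assume "p < r"
      then obtain j where j: "inverse (real (Suc j)) < r - p" using reals_Archimedean[of "r - p"] by auto
      from close_\<omega>[rule_format, of j] show "eventually (\<lambda>n. s n \<omega> < r) sequentially"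
        by eventually_elim (use j in auto)
    next
      fix r assume "r < p"
      then obtain j where j: "inverse (real (Suc j)) < p - r" using reals_Archimedean[of "p - r"] by auto
      from close_\<omega>[rule_format, of j] show "eventually (\<lambda>n. r < s n \<omega>) sequentially"
        by eventually_elim (use j in auto)
    qed
  qed
qed

text \<open>Hoeffding's inequality gives exponentially small tail probabilities, which are summable,
  so by Borel--Cantelli the deviation eventually stays below any fixed tolerance.\<close>
lemma (in prob_space) hoeffding_eventually_close:
  fixes Z :: "nat \<Rightarrow> 'a \<Rightarrow> real"
  assumes ind: "indep_vars (\<lambda>_. borel) Z UNIV"
    and rng: "\<And>i \<omega>. \<omega> \<in> space M \<Longrightarrow> Z i \<omega> \<in> {0..1}"
    and ex: "\<And>i. expectation (Z i) = p"
    and e: "e > 0"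
  shows "AE \<omega> in M. eventually (\<lambda>n. \<bar>(1 / real n) * (\<Sum>i<n. Z i \<omega>) - p\<bar> < e) sequentially"
proof -
  have [measurable]: "Z i \<in> borel_measurable M" for i
    using ind unfolding indep_vars_def by auto
  define A where "A n = {\<omega>\<in>space M. real n * e \<le> \<bar>(\<Sum>i<n. Z i \<omega>) - real n * p\<bar>}" for n
  have A_sets[measurable]: "A n \<in> sets M" for n unfolding A_def by measurable
  have tail: "prob (A n) \<le> 2 * exp (-2 * e\<^sup>2) ^ n" for n
  proof (cases "n = 0")
    case True
    have "prob (A n) \<le> 1" by (rule prob_le_1)
    moreover have "2 * exp (-2 * e\<^sup>2) ^ n = 2" using True by simp
    ultimately show ?thesis by linarith
  next
    case False
    interpret H: Hoeffding_ineq M "{..<n}" Z "\<lambda>_. 0" "\<lambda>_. 1" "real n * p"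
    proof unfold_locales
      show "indep_vars (\<lambda>_. borel) Z {..<n}" using indep_vars_subset[OF ind] by auto
    qed (use rng ex in auto)
    have "prob (A n) \<le> 2 * exp (-2 * (real n * e)\<^sup>2 / (\<Sum>i<n. (1 - 0)\<^sup>2))"
      unfolding A_def using H.Hoeffding_ineq_abs_ge[of "real n * e"] e False by simp
    also have "\<dots> = 2 * exp (-2 * e\<^sup>2) ^ n"
      using False by (simp add: power2_eq_square exp_of_nat_mult[symmetric] field_simps)
    finally show ?thesis .
  qed
  have "summable (\<lambda>n. prob (A n))"
  proof (rule summable_comparison_test)
    show "\<exists>N. \<forall>n\<ge>N. norm (prob (A n)) \<le> 2 * exp (-2 * e\<^sup>2) ^ n" using tail by auto
    show "summable (\<lambda>n. 2 * exp (- 2 * e\<^sup>2) ^ n :: real)"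
      using e by (intro summable_mult summable_geometric) auto
  qed
  then have "AE \<omega> in M. eventually (\<lambda>n. \<omega> \<in> space M - A n) sequentially"
    by (intro borel_cantelli_AE1) (auto simp: emeasure_eq_measure)
  then show ?thesis
  proof (rule AE_mp, intro AE_I2 impI)
    fix \<omega> assume "eventually (\<lambda>n. \<omega> \<in> space M - A n) sequentially"
    from this eventually_gt_at_top[of 0]
    show "eventually (\<lambda>n. \<bar>(1 / real n) * (\<Sum>i<n. Z i \<omega>) - p\<bar> < e) sequentially"
    proof eventually_elim
      case (elim n)
      then have "\<bar>(\<Sum>i<n. Z i \<omega>) - real n * p\<bar> < real n * e" by (auto simp: A_def)
      moreover have "(1 / real n) * (\<Sum>i<n. Z i \<omega>) - p = ((\<Sum>i<n. Z i \<omega>) - real n * p) / real n"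
        using elim by (simp add: field_simps)
      ultimately show ?case using elim by (simp add: abs_div field_simps)
    qed
  qed
qed

lemma (in prob_space) strong_law_unit_interval:
  fixes Z :: "nat \<Rightarrow> 'a \<Rightarrow> real"
  assumes "indep_vars (\<lambda>_. borel) Z UNIV"
    and "\<And>i \<omega>. \<omega> \<in> space M \<Longrightarrow> Z i \<omega> \<in> {0..1}"
    and "\<And>i. expectation (Z i) = p"
  shows "AE \<omega> in M. (\<lambda>n. (1 / real n) * (\<Sum>i<n. Z i \<omega>)) \<longlonglongrightarrow> p"
  using hoeffding_eventually_close[OF assms] by (rule AE_tendsto_if_AE_eventually_close)

definition sq_hellinger :: "'k set \<Rightarrow> ('k \<Rightarrow> real) \<Rightarrow> ('k \<Rightarrow> real) \<Rightarrow> real" where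
  "sq_hellinger KS p q = (\<Sum>k\<in>KS. (sqrt (p k) - sqrt (q k))\<^sup>2)"

lemma sq_hellinger_nonneg: "0 \<le> sq_hellinger KS p q"
  unfolding sq_hellinger_def by (intro sum_nonneg) auto

lemma sq_hellinger_component_le:
  assumes "finite KS" "k \<in> KS"
  shows "(sqrt (p k) - sqrt (q k))\<^sup>2 \<le> sq_hellinger KS p q"
  unfolding sq_hellinger_def using assms by (intro member_le_sum) auto

lemma affinity_eq_sq_hellinger:
  assumes "\<And>k. k \<in> KS \<Longrightarrow> 0 \<le> p k" "\<And>k. k \<in> KS \<Longrightarrow> 0 \<le> q k"
    and "(\<Sum>k\<in>KS. p k) = 1" "(\<Sum>k\<in>KS. q k) = 1"
  shows "(\<Sum>k\<in>KS. sqrt (p k) * sqrt (q k)) = 1 - sq_hellinger KS p q / 2"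
proof -
  have "sq_hellinger KS p q = (\<Sum>k\<in>KS. p k + q k - 2 * (sqrt (p k) * sqrt (q k)))"
    unfolding sq_hellinger_def using assms(1,2) by (intro sum.cong) (auto simp: power2_diff)
  also have "\<dots> = 2 - 2 * (\<Sum>k\<in>KS. sqrt (p k) * sqrt (q k))"
    using assms(3,4) by (simp add: sum.distrib sum_subtractf sum_distrib_left)
  finally show ?thesis by linarith
qed

lemma tendsto_of_sq_hellinger_tendsto_0:
  assumes KS: "finite KS" "k \<in> KS"
    and nonneg: "\<And>n. 0 \<le> p n k" "0 \<le> q k"
    and lim: "(\<lambda>n. sq_hellinger KS q (p n)) \<longlonglongrightarrow> 0"
  shows "(\<lambda>n. p n k) \<longlonglongrightarrow> q k"
proof -
  have "(\<lambda>n. sqrt (p n k) - sqrt (q k)) \<longlonglongrightarrow> 0"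
  proof (rule Lim_null_comparison)
    show "(\<lambda>n. sqrt (sq_hellinger KS q (p n))) \<longlonglongrightarrow> 0"
      using tendsto_real_sqrt[OF lim] by simp
    have "\<bar>sqrt (p n k) - sqrt (q k)\<bar> \<le> sqrt (sq_hellinger KS q (p n))" for n
      using real_sqrt_le_mono[OF sq_hellinger_component_le[OF KS, of q "p n"]] by simp
    then show "eventually (\<lambda>n. norm (sqrt (p n k) - sqrt (q k)) \<le> sqrt (sq_hellinger KS q (p n))) sequentially"
      by simp
  qed
  then have "(\<lambda>n. (sqrt (p n k) - sqrt (q k) + sqrt (q k))\<^sup>2) \<longlonglongrightarrow> (0 + sqrt (q k))\<^sup>2"
    by (intro tendsto_intros)
  then show ?thesis using nonneg by simp
qed

lemma ereal_sum_eq_minf: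
  fixes f :: "'b \<Rightarrow> ereal"
  assumes "finite A" "i \<in> A" "f i = -\<infinity>" "\<And>j. j \<in> A \<Longrightarrow> f j \<noteq> \<infinity>"
  shows "sum f A = -\<infinity>"
proof -
  have "sum f (A - {i}) \<noteq> \<infinity>" using assms by (subst sum_Pinfty) auto
  then show ?thesis using assms by (simp add: sum.remove)
qed

lemma xlog_ne_PInf: "xlog a b \<noteq> \<infinity>"
  by (simp add: xlog_def)

lemma ln_le_sqrt_bound: "0 < (x::real) \<Longrightarrow> ln x \<le> 2 * (sqrt x - 1)"
  using ln_le_minus_one[of "sqrt x"] by (simp add: ln_sqrt)

text \<open>If the multinomial log-likelihood of \<open>R\<close> is at least that of a positive \<open>Q\<close>, then
  \<open>R\<close> is positive wherever the data are, and by \<open>ln x \<le> 2(\<surd>x - 1)\<close> the weighted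
  square-root likelihood ratios have nonnegative excess.\<close>
lemma loglik_le_imp_sqrt_ratio_nonneg:
  fixes a Q R :: "'i \<Rightarrow> 'k \<Rightarrow> real"
  assumes fin: "finite S" "finite KS"
    and a: "\<And>I k. I \<in> S \<Longrightarrow> k \<in> KS \<Longrightarrow> 0 \<le> a I k"
    and Q: "\<And>I k. I \<in> S \<Longrightarrow> k \<in> KS \<Longrightarrow> 0 < Q I k"
    and R: "\<And>I k. I \<in> S \<Longrightarrow> k \<in> KS \<Longrightarrow> 0 \<le> R I k"
    and le: "(\<Sum>I\<in>S. \<Sum>k\<in>KS. xlog (a I k) (Q I k)) \<le> (\<Sum>I\<in>S. \<Sum>k\<in>KS. xlog (a I k) (R I k))"
  shows "0 \<le> (\<Sum>I\<in>S. \<Sum>k\<in>KS. a I k * (sqrt (R I k / Q I k) - 1))"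
proof -
  have xlog_Q: "xlog (a I k) (Q I k) = ereal (a I k * ln (Q I k))" if "I \<in> S" "k \<in> KS" for I k
    using Q[OF that] by (simp add: xlog_def)
  have sumQ: "(\<Sum>I\<in>S. \<Sum>k\<in>KS. xlog (a I k) (Q I k)) = ereal (\<Sum>I\<in>S. \<Sum>k\<in>KS. a I k * ln (Q I k))"
    by (simp add: xlog_Q cong: sum.cong)
  have R_pos: "0 < R I k" if "I \<in> S" "k \<in> KS" "a I k \<noteq> 0" for I k
  proof (rule ccontr)
    assume "\<not> 0 < R I k"
    then have "xlog (a I k) (R I k) = -\<infinity>" using R[OF that(1,2)] that(3) by (simp add: xlog_def)
    then have "(\<Sum>I\<in>S. \<Sum>k\<in>KS. xlog (a I k) (R I k)) = -\<infinity>"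
      using fin that by (intro ereal_sum_eq_minf[where i=I] ereal_sum_eq_minf[where i=k])
        (auto simp: sum_Pinfty xlog_ne_PInf)
    with le sumQ show False by simp
  qed
  have xlog_R: "xlog (a I k) (R I k) = ereal (a I k * ln (R I k))" if "I \<in> S" "k \<in> KS" for I k
    using R_pos[OF that] by (cases "a I k = 0") (auto simp: xlog_def)
  have sumR: "(\<Sum>I\<in>S. \<Sum>k\<in>KS. xlog (a I k) (R I k)) = ereal (\<Sum>I\<in>S. \<Sum>k\<in>KS. a I k * ln (R I k))"
    by (simp add: xlog_R cong: sum.cong)
  have "(\<Sum>I\<in>S. \<Sum>k\<in>KS. a I k * ln (Q I k)) \<le> (\<Sum>I\<in>S. \<Sum>k\<in>KS. a I k * ln (R I k))"
    using le sumQ sumR by simp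
  also have "\<dots> \<le> (\<Sum>I\<in>S. \<Sum>k\<in>KS. a I k * ln (Q I k) + 2 * (a I k * (sqrt (R I k / Q I k) - 1)))"
  proof (intro sum_mono)
    fix I k assume Ik: "I \<in> S" "k \<in> KS"
    show "a I k * ln (R I k) \<le> a I k * ln (Q I k) + 2 * (a I k * (sqrt (R I k / Q I k) - 1))"
    proof (cases "a I k = 0")
      case False
      with Ik have pos: "0 < R I k" "0 < Q I k" using R_pos Q by auto
      then have "ln (R I k) \<le> ln (Q I k) + 2 * (sqrt (R I k / Q I k) - 1)"
        using ln_le_sqrt_bound[of "R I k / Q I k"] by (simp add: ln_div)
      from mult_left_mono[OF this a[OF Ik]] show ?thesis by (simp add: algebra_simps)
    qed simp
  qed
  also have "\<dots> = (\<Sum>I\<in>S. \<Sum>k\<in>KS. a I k * ln (Q I k)) + 2 * (\<Sum>I\<in>S. \<Sum>k\<in>KS. a I k * (sqrt (R I k / Q I k) - 1))"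
    by (simp add: sum.distrib sum_distrib_left)
  finally show ?thesis by simp
qed

text \<open>Abstract consistency setting: cells \<open>I \<in> II\<close> with limiting weights \<open>g I\<close>, categories
  \<open>k \<in> KS\<close> with true probabilities \<open>q I k\<close>, observed frequencies \<open>a n I k\<close> converging to
  \<open>g I * q I k\<close>, and fitted probabilities \<open>phat n I k\<close> whose log-likelihood dominates that
  of every mixture of \<open>q\<close> with the uniform distribution on \<open>KS\<close>.\<close>
locale cell_fit =
  fixes II :: "'i set" and KS :: "'k set"
    and a :: "nat \<Rightarrow> 'i \<Rightarrow> 'k \<Rightarrow> real"
    and g :: "'i \<Rightarrow> real" and q :: "'i \<Rightarrow> 'k \<Rightarrow> real"
    and phat :: "nat \<Rightarrow> 'i \<Rightarrow> 'k \<Rightarrow> real"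
  assumes KS_finite: "finite KS" and KS_nonempty: "KS \<noteq> {}"
    and support_finite: "\<And>n. finite {I\<in>II. (\<Sum>k\<in>KS. a n I k) \<noteq> 0}"
    and a_nonneg: "\<And>n I k. I \<in> II \<Longrightarrow> k \<in> KS \<Longrightarrow> 0 \<le> a n I k"
    and a_mass: "\<And>n F. finite F \<Longrightarrow> F \<subseteq> II \<Longrightarrow> (\<Sum>I\<in>F. \<Sum>k\<in>KS. a n I k) \<le> 1"
    and a_lim: "\<And>I k. I \<in> II \<Longrightarrow> k \<in> KS \<Longrightarrow> (\<lambda>n. a n I k) \<longlonglongrightarrow> g I * q I k"
    and g_pos: "\<And>I. I \<in> II \<Longrightarrow> 0 < g I"
    and g_exhaust: "\<And>\<tau>. 0 < \<tau> \<Longrightarrow> \<exists>F. finite F \<and> F \<subseteq> II \<and> 1 - \<tau> \<le> (\<Sum>I\<in>F. g I)"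
    and q_nonneg: "\<And>I k. I \<in> II \<Longrightarrow> k \<in> KS \<Longrightarrow> 0 \<le> q I k"
    and q_sum: "\<And>I. I \<in> II \<Longrightarrow> (\<Sum>k\<in>KS. q I k) = 1"
    and phat_nonneg: "\<And>n I k. I \<in> II \<Longrightarrow> k \<in> KS \<Longrightarrow> 0 \<le> phat n I k"
    and phat_sum: "\<And>n I. I \<in> II \<Longrightarrow> (\<Sum>k\<in>KS. phat n I k) = 1"
    and phat_opt: "\<And>n \<epsilon>. 0 < \<epsilon> \<Longrightarrow> \<epsilon> < 1 \<Longrightarrow>
      (\<Sum>I\<in>{I\<in>II. (\<Sum>k\<in>KS. a n I k) \<noteq> 0}. \<Sum>k\<in>KS. xlog (a n I k) ((1 - \<epsilon>) * q I k + \<epsilon> / real (card KS)))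
      \<le> (\<Sum>I\<in>{I\<in>II. (\<Sum>k\<in>KS. a n I k) \<noteq> 0}. \<Sum>k\<in>KS. xlog (a n I k) (phat n I k))"
begin

definition mix :: "real \<Rightarrow> 'i \<Rightarrow> 'k \<Rightarrow> real" where
  "mix \<epsilon> I k = (1 - \<epsilon>) * q I k + \<epsilon> / real (card KS)"

definition ratio :: "real \<Rightarrow> nat \<Rightarrow> 'i \<Rightarrow> 'k \<Rightarrow> real" where
  "ratio \<epsilon> n I k = sqrt (phat n I k / mix \<epsilon> I k)"

definition ratio_bound :: "real \<Rightarrow> real" where
  "ratio_bound \<epsilon> = sqrt (real (card KS) / \<epsilon>)"

lemma card_KS_pos: "0 < real (card KS)"
  using KS_finite KS_nonempty by (simp add: card_gt_0_iff)

lemma phat_le_1: "I \<in> II \<Longrightarrow> k \<in> KS \<Longrightarrow> phat n I k \<le> 1"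
  using member_le_sum[of k KS "phat n I"] KS_finite phat_nonneg phat_sum by force

lemma mix_lower:
  assumes "0 < \<epsilon>" "\<epsilon> < 1" "I \<in> II" "k \<in> KS"
  shows "\<epsilon> / real (card KS) \<le> mix \<epsilon> I k" "(1 - \<epsilon>) * q I k \<le> mix \<epsilon> I k" "0 < mix \<epsilon> I k"
  using assms q_nonneg[of I k] card_KS_pos
  by (auto simp: mix_def intro!: add_nonneg_pos)

lemma ratio_nonneg:
  assumes "0 < \<epsilon>" "\<epsilon> < 1" "I \<in> II" "k \<in> KS"
  shows "0 \<le> ratio \<epsilon> n I k"
  using phat_nonneg[OF assms(3,4)] mix_lower(3)[OF assms] by (simp add: ratio_def)

lemma ratio_le_bound:
  assumes "0 < \<epsilon>" "\<epsilon> < 1" "I \<in> II" "k \<in> KS"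
  shows "ratio \<epsilon> n I k \<le> ratio_bound \<epsilon>"
proof -
  have "phat n I k / mix \<epsilon> I k \<le> 1 / (\<epsilon> / real (card KS))"
    using assms phat_le_1 phat_nonneg mix_lower card_KS_pos by (intro frac_le) auto
  then show ?thesis by (simp add: ratio_def ratio_bound_def)
qed

lemma ratio_bound_pos: "0 < \<epsilon> \<Longrightarrow> 0 < ratio_bound \<epsilon>"
  using card_KS_pos by (simp add: ratio_bound_def)

text \<open>The fitted probabilities beat every mixture of the truth with the uniform distribution.
  Combined with \<open>ln x \<le> 2(\<surd>x - 1)\<close> and truncated to a finite family \<open>F\<close> of cells (the
  remaining mass being controlled by the bound on the ratio) this gives:\<close>
lemma truncated_ratio_ineq:
  assumes \<epsilon>: "0 < \<epsilon>" "\<epsilon> < 1" and F: "finite F" "F \<subseteq> II"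
  shows "0 \<le> (\<Sum>I\<in>F. \<Sum>k\<in>KS. a n I k * (ratio \<epsilon> n I k - 1))
              + ratio_bound \<epsilon> * (1 - (\<Sum>I\<in>F. \<Sum>k\<in>KS. a n I k))"
proof -
  define S where "S = {I\<in>II. (\<Sum>k\<in>KS. a n I k) \<noteq> 0}"
  have S: "finite S" "S \<subseteq> II" using support_finite[of n] by (auto simp: S_def)
  define T where "T I = (\<Sum>k\<in>KS. a n I k * (ratio \<epsilon> n I k - 1))" for I
  have T_outside: "T I = 0" if "I \<in> II" "I \<notin> S" for I
  proof -
    have "\<forall>k\<in>KS. a n I k = 0"
      using that sum_nonneg_eq_0_iff[OF KS_finite] a_nonneg by (auto simp: S_def)
    then show ?thesis by (simp add: T_def)
  qed
  have "0 \<le> (\<Sum>I\<in>S. T I)"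
    unfolding T_def ratio_def
  proof (rule loglik_le_imp_sqrt_ratio_nonneg[OF S(1) KS_finite])
    show "(\<Sum>I\<in>S. \<Sum>k\<in>KS. xlog (a n I k) (mix \<epsilon> I k)) \<le> (\<Sum>I\<in>S. \<Sum>k\<in>KS. xlog (a n I k) (phat n I k))"
      using phat_opt[OF \<epsilon>, of n] by (simp add: S_def mix_def)
  qed (use S a_nonneg mix_lower(3)[OF \<epsilon>] phat_nonneg in auto)
  also have "(\<Sum>I\<in>S. T I) = (\<Sum>I\<in>F. T I) + (\<Sum>I\<in>S - F. T I)"
  proof -
    have "(\<Sum>I\<in>S. T I) = (\<Sum>I\<in>S \<inter> F. T I) + (\<Sum>I\<in>S - F. T I)"
      using S(1) by (rule sum.Int_Diff)
    moreover have "(\<Sum>I\<in>S \<inter> F. T I) = (\<Sum>I\<in>F. T I)"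
      using F T_outside by (intro sum.mono_neutral_left) auto
    ultimately show ?thesis by simp
  qed
  also have "(\<Sum>I\<in>S - F. T I) \<le> ratio_bound \<epsilon> * (\<Sum>I\<in>S - F. \<Sum>k\<in>KS. a n I k)"
    unfolding T_def sum_distrib_left
  proof (intro sum_mono)
    fix I k assume "I \<in> S - F" "k \<in> KS"
    then have Ik: "I \<in> II" "k \<in> KS" using S by auto
    have "ratio \<epsilon> n I k - 1 \<le> ratio_bound \<epsilon>" using ratio_le_bound[OF \<epsilon> Ik, of n] by simp
    from mult_left_mono[OF this a_nonneg[OF Ik]]
    show "a n I k * (ratio \<epsilon> n I k - 1) \<le> ratio_bound \<epsilon> * a n I k" by (simp add: mult.commute)
  qed
  also have "(\<Sum>I\<in>S - F. \<Sum>k\<in>KS. a n I k) \<le> 1 - (\<Sum>I\<in>F. \<Sum>k\<in>KS. a n I k)"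
  proof -
    have "(\<Sum>I\<in>S - F. \<Sum>k\<in>KS. a n I k) + (\<Sum>I\<in>F. \<Sum>k\<in>KS. a n I k) = (\<Sum>I\<in>(S - F) \<union> F. \<Sum>k\<in>KS. a n I k)"
      using S F by (intro sum.union_disjoint[symmetric]) auto
    also have "\<dots> \<le> 1" using S F by (intro a_mass) auto
    finally show ?thesis by simp
  qed
  finally show ?thesis
    using ratio_bound_pos[OF \<epsilon>(1)] unfolding T_def by (smt (verit) mult_left_mono)
qed

lemma expected_ratio_le:
  assumes \<epsilon>: "0 < \<epsilon>" "\<epsilon> < 1" and I: "I \<in> II"
  shows "(\<Sum>k\<in>KS. q I k * ratio \<epsilon> n I k) - 1
           \<le> (1 / sqrt (1 - \<epsilon>) - 1) - sq_hellinger KS (q I) (phat n I) / 2"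
proof -
  have "(\<Sum>k\<in>KS. q I k * ratio \<epsilon> n I k) \<le> (\<Sum>k\<in>KS. sqrt (q I k) * sqrt (phat n I k) / sqrt (1 - \<epsilon>))"
  proof (intro sum_mono)
    fix k assume k: "k \<in> KS"
    show "q I k * ratio \<epsilon> n I k \<le> sqrt (q I k) * sqrt (phat n I k) / sqrt (1 - \<epsilon>)"
    proof (cases "q I k = 0")
      case False
      then have q_pos: "0 < q I k" using q_nonneg[OF I k] by simp
      have "phat n I k / mix \<epsilon> I k \<le> phat n I k / ((1 - \<epsilon>) * q I k)"
        using mix_lower[OF \<epsilon> I k] q_pos \<epsilon> phat_nonneg[OF I k] by (intro divide_left_mono) auto
      then have "ratio \<epsilon> n I k \<le> sqrt (phat n I k / ((1 - \<epsilon>) * q I k))"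
        unfolding ratio_def by (rule real_sqrt_le_mono)
      then have "ratio \<epsilon> n I k \<le> sqrt (phat n I k) / (sqrt (1 - \<epsilon>) * sqrt (q I k))"
        by (simp add: real_sqrt_divide real_sqrt_mult)
      from mult_left_mono[OF this] q_pos
      have "q I k * ratio \<epsilon> n I k \<le> q I k * (sqrt (phat n I k) / (sqrt (1 - \<epsilon>) * sqrt (q I k)))"
        by simp
      also have "\<dots> = (q I k / sqrt (q I k)) * sqrt (phat n I k) / sqrt (1 - \<epsilon>)"
        by simp
      also have "\<dots> = sqrt (q I k) * sqrt (phat n I k) / sqrt (1 - \<epsilon>)"
        using q_pos by (simp add: real_div_sqrt)
      finally show ?thesis .
    qed simp
  qed
  also have "\<dots> = (1 - sq_hellinger KS (q I) (phat n I) / 2) / sqrt (1 - \<epsilon>)"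
    using affinity_eq_sq_hellinger[of KS "q I" "phat n I"] q_nonneg[OF I] phat_nonneg[OF I]
      q_sum[OF I] phat_sum[OF I]
    by (simp add: sum_divide_distrib[symmetric])
  also have "\<dots> \<le> 1 / sqrt (1 - \<epsilon>) - sq_hellinger KS (q I) (phat n I) / 2"
  proof -
    have "1 \<le> 1 / sqrt (1 - \<epsilon>)" using \<epsilon> by (simp add: real_sqrt_le_1_iff)
    from mult_right_mono[OF this, of "sq_hellinger KS (q I) (phat n I) / 2"]
    show ?thesis using sq_hellinger_nonneg[of KS "q I" "phat n I"] by (simp add: diff_divide_distrib)
  qed
  finally show ?thesis by simp
qed

lemma cell_mass_tendsto:
  assumes "finite F" "F \<subseteq> II"
  shows "(\<lambda>n. \<Sum>I\<in>F. \<Sum>k\<in>KS. a n I k) \<longlonglongrightarrow> (\<Sum>I\<in>F. g I)"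
proof -
  have "(\<lambda>n. \<Sum>I\<in>F. \<Sum>k\<in>KS. a n I k) \<longlonglongrightarrow> (\<Sum>I\<in>F. \<Sum>k\<in>KS. g I * q I k)"
    using assms by (intro tendsto_sum a_lim) auto
  also have "(\<Sum>I\<in>F. \<Sum>k\<in>KS. g I * q I k) = (\<Sum>I\<in>F. g I)"
    using assms q_sum by (simp add: sum_distrib_left[symmetric] subset_iff)
  finally show ?thesis .
qed

lemma g_mass_le_1: "finite F \<Longrightarrow> F \<subseteq> II \<Longrightarrow> (\<Sum>I\<in>F. g I) \<le> 1"
  using a_mass by (intro LIMSEQ_le_const2[OF cell_mass_tendsto]) auto

text \<open>Replacing the observed frequencies by their limits costs asymptotically nothing, uniformly
  in the (bounded) ratios.\<close>
lemma weighted_error_tendsto_0: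
  assumes \<epsilon>: "0 < \<epsilon>" "\<epsilon> < 1" and F: "finite F" "F \<subseteq> II"
  shows "(\<lambda>n. \<Sum>I\<in>F. \<Sum>k\<in>KS. (a n I k - g I * q I k) * (ratio \<epsilon> n I k - 1)) \<longlonglongrightarrow> 0"
proof (rule Lim_null_comparison)
  let ?B = "ratio_bound \<epsilon> + 1"
  show "(\<lambda>n. ?B * (\<Sum>I\<in>F. \<Sum>k\<in>KS. \<bar>a n I k - g I * q I k\<bar>)) \<longlonglongrightarrow> 0"
  proof -
    have "(\<lambda>n. ?B * (\<Sum>I\<in>F. \<Sum>k\<in>KS. \<bar>a n I k - g I * q I k\<bar>))
            \<longlonglongrightarrow> ?B * (\<Sum>I\<in>F. \<Sum>k\<in>KS. \<bar>g I * q I k - g I * q I k\<bar>)"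
      using F by (intro tendsto_intros a_lim) auto
    then show ?thesis by simp
  qed
  have "\<bar>\<Sum>I\<in>F. \<Sum>k\<in>KS. (a n I k - g I * q I k) * (ratio \<epsilon> n I k - 1)\<bar>
          \<le> ?B * (\<Sum>I\<in>F. \<Sum>k\<in>KS. \<bar>a n I k - g I * q I k\<bar>)" for n
  proof -
    have "\<bar>\<Sum>I\<in>F. \<Sum>k\<in>KS. (a n I k - g I * q I k) * (ratio \<epsilon> n I k - 1)\<bar>
            \<le> (\<Sum>I\<in>F. \<Sum>k\<in>KS. \<bar>(a n I k - g I * q I k) * (ratio \<epsilon> n I k - 1)\<bar>)"
      by (rule order_trans[OF sum_abs]) (intro sum_mono sum_abs)
    also have "\<dots> \<le> (\<Sum>I\<in>F. \<Sum>k\<in>KS. ?B * \<bar>a n I k - g I * q I k\<bar>)"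
    proof (intro sum_mono)
      fix I k assume "I \<in> F" "k \<in> KS"
      then have Ik: "I \<in> II" "k \<in> KS" using F by auto
      have "\<bar>ratio \<epsilon> n I k - 1\<bar> \<le> ?B"
        using ratio_le_bound[OF \<epsilon> Ik, of n] ratio_nonneg[OF \<epsilon> Ik, of n] ratio_bound_pos[OF \<epsilon>(1)]
        by linarith
      then show "\<bar>(a n I k - g I * q I k) * (ratio \<epsilon> n I k - 1)\<bar> \<le> ?B * \<bar>a n I k - g I * q I k\<bar>"
        by (simp add: abs_mult mult.commute mult_right_mono)
    qed
    finally show ?thesis by (simp add: sum_distrib_left)
  qed
  then show "eventually (\<lambda>n. norm (\<Sum>I\<in>F. \<Sum>k\<in>KS. (a n I k - g I * q I k) * (ratio \<epsilon> n I k - 1))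
                \<le> ?B * (\<Sum>I\<in>F. \<Sum>k\<in>KS. \<bar>a n I k - g I * q I k\<bar>)) sequentially"
    by simp
qed

lemma ratio_sum_split:
  assumes "F \<subseteq> II"
  shows "(\<Sum>I\<in>F. \<Sum>k\<in>KS. a n I k * (ratio \<epsilon> n I k - 1))
       = (\<Sum>I\<in>F. \<Sum>k\<in>KS. (a n I k - g I * q I k) * (ratio \<epsilon> n I k - 1))
         + (\<Sum>I\<in>F. g I * ((\<Sum>k\<in>KS. q I k * ratio \<epsilon> n I k) - 1))"
proof -
  have "g I * ((\<Sum>k\<in>KS. q I k * ratio \<epsilon> n I k) - 1) = (\<Sum>k\<in>KS. g I * q I k * (ratio \<epsilon> n I k - 1))"
    if "I \<in> II" for I
  proof -
    have "(\<Sum>k\<in>KS. g I * q I k * (ratio \<epsilon> n I k - 1))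
        = g I * (\<Sum>k\<in>KS. q I k * ratio \<epsilon> n I k) - g I * (\<Sum>k\<in>KS. q I k)"
      by (simp add: sum_distrib_left sum_subtractf algebra_simps)
    then show ?thesis using q_sum[OF that] by (simp add: right_diff_distrib)
  qed
  then show ?thesis
    using assms by (simp add: subset_iff algebra_simps sum.distrib[symmetric])
qed

lemma expected_ratio_sum_le:
  assumes \<epsilon>: "0 < \<epsilon>" "\<epsilon> < 1" and F: "finite F" "F \<subseteq> II" "I0 \<in> F"
  shows "(\<Sum>I\<in>F. g I * ((\<Sum>k\<in>KS. q I k * ratio \<epsilon> n I k) - 1))
           \<le> (1 / sqrt (1 - \<epsilon>) - 1) - g I0 * sq_hellinger KS (q I0) (phat n I0) / 2"
proof -
  define \<eta> where "\<eta> = 1 / sqrt (1 - \<epsilon>) - 1"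
  have \<eta>: "0 \<le> \<eta>" using \<epsilon> by (simp add: \<eta>_def real_sqrt_le_1_iff)
  define h where "h I = sq_hellinger KS (q I) (phat n I)" for I
  have cell: "g I * ((\<Sum>k\<in>KS. q I k * ratio \<epsilon> n I k) - 1) \<le> \<eta> * g I - g I * h I / 2"
    if "I \<in> F" for I
  proof -
    have I: "I \<in> II" using that F by auto
    have "(\<Sum>k\<in>KS. q I k * ratio \<epsilon> n I k) - 1 \<le> \<eta> - h I / 2"
      using expected_ratio_le[OF \<epsilon> I, of n] by (simp add: h_def \<eta>_def)
    from mult_left_mono[OF this less_imp_le[OF g_pos[OF I]]] show ?thesis
      by (simp add: algebra_simps)
  qed
  have "(\<Sum>I\<in>F. g I * ((\<Sum>k\<in>KS. q I k * ratio \<epsilon> n I k) - 1)) \<le> (\<Sum>I\<in>F. \<eta> * g I - g I * h I / 2)"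
    using cell by (rule sum_mono)
  also have "\<dots> = \<eta> * (\<Sum>I\<in>F. g I) - (\<Sum>I\<in>F. g I * h I) / 2"
    by (simp add: sum_subtractf sum_distrib_left sum_divide_distrib)
  also have "\<dots> \<le> \<eta> - g I0 * h I0 / 2"
  proof -
    have "\<eta> * (\<Sum>I\<in>F. g I) \<le> \<eta>" using g_mass_le_1[OF F(1,2)] \<eta> by (simp add: mult_left_le)
    moreover have "g I0 * h I0 \<le> (\<Sum>I\<in>F. g I * h I)"
      using F g_pos by (intro member_le_sum) (auto simp: h_def sq_hellinger_nonneg less_imp_le)
    ultimately show ?thesis by linarith
  qed
  finally show ?thesis by (simp add: \<eta>_def h_def)
qed

text \<open>The mixture weight \<open>\<epsilon>\<close> is chosen so that the
  loss \<open>1/\<surd>(1-\<epsilon>) - 1\<close> is small, then a finite family of cells carrying almost all the mass.\<close>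
lemma eventually_sq_hellinger_le:
  assumes I0: "I0 \<in> II" and \<delta>: "0 < \<delta>"
  shows "eventually (\<lambda>n. sq_hellinger KS (q I0) (phat n I0) \<le> \<delta>) sequentially"
proof -
  define \<eta> where "\<eta> = g I0 * \<delta> / 8"
  have \<eta>: "0 < \<eta>" using g_pos[OF I0] \<delta> by (simp add: \<eta>_def)
  define \<epsilon> where "\<epsilon> = 1 - 1 / (1 + \<eta>)\<^sup>2"
  have "1 < (1 + \<eta>)\<^sup>2"
    using \<eta> mult_pos_pos[OF \<eta> \<eta>] by (simp add: power2_eq_square algebra_simps add_pos_pos)
  then have \<epsilon>: "0 < \<epsilon>" "\<epsilon> < 1" by (auto simp: \<epsilon>_def divide_less_eq)
  have loss: "1 / sqrt (1 - \<epsilon>) - 1 = \<eta>"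
    using \<eta> by (simp add: \<epsilon>_def real_sqrt_divide)
  define B where "B = ratio_bound \<epsilon>"
  have B: "0 < B" using ratio_bound_pos[OF \<epsilon>(1)] by (simp add: B_def)
  obtain F0 where F0: "finite F0" "F0 \<subseteq> II" "1 - \<eta> / B \<le> (\<Sum>I\<in>F0. g I)"
    using g_exhaust[of "\<eta> / B"] \<eta> B by auto
  define F where "F = insert I0 F0"
  have F: "finite F" "F \<subseteq> II" "I0 \<in> F" using F0 I0 by (auto simp: F_def)
  have F_mass: "1 - \<eta> / B \<le> (\<Sum>I\<in>F. g I)"
    using F0 g_pos[OF I0] by (cases "I0 \<in> F0") (auto simp: F_def insert_absorb)
  define E where "E n = (\<Sum>I\<in>F. \<Sum>k\<in>KS. (a n I k - g I * q I k) * (ratio \<epsilon> n I k - 1))" for n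
  have "(\<lambda>n. \<bar>E n\<bar>) \<longlonglongrightarrow> 0"
    using tendsto_rabs[OF weighted_error_tendsto_0[OF \<epsilon> F(1,2)]] by (simp add: E_def)
  then have "eventually (\<lambda>n. \<bar>E n\<bar> < \<eta>) sequentially"
    using \<eta> by (rule order_tendstoD(2))
  moreover have "(\<lambda>n. \<bar>(\<Sum>I\<in>F. \<Sum>k\<in>KS. a n I k) - (\<Sum>I\<in>F. g I)\<bar>) \<longlonglongrightarrow> 0"
    using tendsto_rabs[OF tendsto_diff[OF cell_mass_tendsto[OF F(1,2)] tendsto_const[of "\<Sum>I\<in>F. g I"]]]
    by simp
  then have "eventually (\<lambda>n. \<bar>(\<Sum>I\<in>F. \<Sum>k\<in>KS. a n I k) - (\<Sum>I\<in>F. g I)\<bar> < \<eta> / B) sequentially"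
    using \<eta> B by (intro order_tendstoD(2)) auto
  ultimately show ?thesis
  proof eventually_elim
    case (elim n)
    define h where "h = sq_hellinger KS (q I0) (phat n I0)"
    have main: "(\<Sum>I\<in>F. g I * ((\<Sum>k\<in>KS. q I k * ratio \<epsilon> n I k) - 1)) \<le> \<eta> - g I0 * h / 2"
      using expected_ratio_sum_le[OF \<epsilon> F] loss by (simp add: h_def)
    have "B * (1 - (\<Sum>I\<in>F. \<Sum>k\<in>KS. a n I k)) \<le> B * (\<eta> / B + \<eta> / B)"
      using elim F_mass B by (intro mult_left_mono) auto
    then have tail: "B * (1 - (\<Sum>I\<in>F. \<Sum>k\<in>KS. a n I k)) \<le> 2 * \<eta>"
      using B by (simp add: distrib_left)
    have "0 \<le> E n + (\<eta> - g I0 * h / 2) + 2 * \<eta>"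
      using truncated_ratio_ineq[OF \<epsilon> F(1,2), of n] ratio_sum_split[OF F(2), of n \<epsilon>] main tail
      unfolding E_def B_def by linarith
    then have "g I0 * h / 2 \<le> 4 * \<eta>" using elim by linarith
    then have "g I0 * h \<le> g I0 * \<delta>" by (simp add: \<eta>_def mult.commute)
    then show ?case using g_pos[OF I0] by (simp add: h_def)
  qed
qed

theorem phat_tendsto:
  assumes "I \<in> II" "k \<in> KS"
  shows "(\<lambda>n. phat n I k) \<longlonglongrightarrow> q I k"
proof (rule tendsto_of_sq_hellinger_tendsto_0[OF KS_finite \<open>k \<in> KS\<close>])
  show "(\<lambda>n. sq_hellinger KS (q I) (phat n I)) \<longlonglongrightarrow> 0"
  proof (rule order_tendstoI)
    fix e :: real assume "0 < e"
    with eventually_sq_hellinger_le[OF \<open>I \<in> II\<close>, of "e / 2"]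
    show "eventually (\<lambda>n. sq_hellinger KS (q I) (phat n I) < e) sequentially"
      by (auto elim: eventually_mono)
  next
    fix e :: real assume "e < 0"
    then show "eventually (\<lambda>n. e < sq_hellinger KS (q I) (phat n I)) sequentially"
      using sq_hellinger_nonneg by (intro always_eventually) (auto intro: less_le_trans)
  qed
qed (use assms phat_nonneg q_nonneg in auto)

end

locale grouped_model =
  fixes P :: "'a measure" and K :: nat
    and X :: "nat \<Rightarrow> 'a \<Rightarrow> real" and Y :: "nat \<Rightarrow> 'a \<Rightarrow> nat" and C :: "nat \<Rightarrow> 'a \<Rightarrow> real"
    and G :: "real measure"
    and II :: "real set set" and m :: "real set \<Rightarrow> real"
  assumes P: "prob_space P"
    and X_meas: "\<And>i. X i \<in> borel_measurable P"
    and Y_meas: "\<And>i. Y i \<in> measurable P (count_space UNIV)"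
    and C_meas: "\<And>i. C i \<in> borel_measurable P"
    and Y_range: "\<And>i \<omega>. \<omega> \<in> space P \<Longrightarrow> Y i \<omega> \<in> {1..K}"
    and indep: "prob_space.indep_vars P (\<lambda>_. borel \<Otimes>\<^sub>M count_space UNIV \<Otimes>\<^sub>M borel)
                  (\<lambda>i \<omega>. (X i \<omega>, Y i \<omega>, C i \<omega>)) UNIV"
    and ident: "\<And>i. distr P (borel \<Otimes>\<^sub>M count_space UNIV \<Otimes>\<^sub>M borel) (\<lambda>\<omega>. (X i \<omega>, Y i \<omega>, C i \<omega>))
                   = distr P (borel \<Otimes>\<^sub>M count_space UNIV \<Otimes>\<^sub>M borel) (\<lambda>\<omega>. (X 0 \<omega>, Y 0 \<omega>, C 0 \<omega>))"
    and C_indep: "\<And>i. prob_space.indep_set P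
           {(\<lambda>\<omega>. (X i \<omega>, Y i \<omega>)) -` A \<inter> space P | A. A \<in> sets (borel \<Otimes>\<^sub>M count_space UNIV)}
           {C i -` B \<inter> space P | B. B \<in> sets borel}"
    and G: "G = distr P borel (C 0)"
    and II_countable: "countable II"
    and II_interval: "\<And>I. I \<in> II \<Longrightarrow> is_interval I"
    and II_disjoint: "disjoint II"
    and II_pos: "\<And>I. I \<in> II \<Longrightarrow> measure G I > 0"
    and II_full: "measure G (\<Union>II) = 1"
    and m_in: "\<And>I. I \<in> II \<Longrightarrow> m I \<in> I"
    and m_inj: "inj_on m II"
begin

sublocale P: prob_space P by (rule P)

sublocale G: prob_space G
  unfolding G using C_meas by (intro P.prob_space_distr) auto

abbreviation H0 :: "nat \<Rightarrow> real set \<Rightarrow> real" where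
  "H0 \<equiv> grp_H0 P (X 0) (Y 0) G"

abbreviation obs_space :: "(real \<times> nat \<times> real) measure" where
  "obs_space \<equiv> borel \<Otimes>\<^sub>M count_space UNIV \<Otimes>\<^sub>M borel"

definition obs :: "nat \<Rightarrow> 'a \<Rightarrow> real \<times> nat \<times> real" where
  "obs i \<omega> = (X i \<omega>, Y i \<omega>, C i \<omega>)"

lemma obs_meas[measurable]: "obs i \<in> measurable P obs_space"
  unfolding obs_def using X_meas Y_meas C_meas by measurable

lemma distr_obs: "distr P obs_space (obs i) = distr P obs_space (obs 0)"
  using ident[of i] by (simp add: obs_def[abs_def])

lemma sets_G[simp]: "sets G = sets borel"
  by (simp add: G)

lemma II_sets: "I \<in> II \<Longrightarrow> I \<in> sets borel"
  using II_pos[of I] measure_notin_sets[of I G] by fastforce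

lemma distr_C: "distr P borel (C i) = G"
proof -
  have "distr P borel (C i) = distr (distr P obs_space (obs i)) borel (\<lambda>z. snd (snd z))"
    by (subst distr_distr) (auto simp: obs_def comp_def)
  also have "\<dots> = distr (distr P obs_space (obs 0)) borel (\<lambda>z. snd (snd z))"
    by (simp only: distr_obs[of i])
  also have "\<dots> = G"
    by (subst distr_distr) (auto simp: obs_def comp_def G)
  finally show ?thesis .
qed

lemma AE_C_in_cells: "AE \<omega> in P. \<forall>i. C i \<omega> \<in> \<Union>II"
proof -
  have UII_sets: "\<Union>II \<in> sets borel"
    using II_full measure_notin_sets[of "\<Union>II" G] by force
  have "AE \<omega> in P. C i \<omega> \<in> \<Union>II" for i
  proof -
    have "P.prob {\<omega>\<in>space P. C i \<omega> \<in> \<Union>II} = measure (distr P borel (C i)) (\<Union>II)"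
      using UII_sets C_meas by (subst measure_distr) (auto simp: vimage_def Int_def conj_commute)
    also have "\<dots> = 1" using distr_C II_full by simp
    finally show ?thesis by (auto dest!: P.AE_prob_1)
  qed
  then show ?thesis by (simp add: AE_all_countable)
qed

lemma D_eq_iff:
  assumes c: "c \<in> \<Union>II" and I: "I \<in> II"
  shows "grp_D II m c = m I \<longleftrightarrow> c \<in> I"
proof -
  obtain J where J: "J \<in> II" "c \<in> J" using c by blast
  have uniq: "J' = J" if "J' \<in> II" "c \<in> J'" for J'
  proof (rule ccontr)
    assume "J' \<noteq> J"
    then have "J' \<inter> J = {}" using II_disjoint that(1) J(1) unfolding disjoint_def by blast
    then show False using that(2) J(2) by blast
  qed
  have "(THE I. I \<in> II \<and> c \<in> I) = J"
    by (rule the_equality) (use J uniq in blast)+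
  then have D: "grp_D II m c = m J" using J unfolding grp_D_def by auto
  show ?thesis
  proof
    assume "grp_D II m c = m I"
    then have "J = I" using D inj_onD[OF m_inj _ J(1) I] by simp
    then show "c \<in> I" using J by simp
  next
    assume "c \<in> I"
    then show "grp_D II m c = m I" using D uniq I by blast
  qed
qed

lemma strong_law_obs:
  fixes f :: "real \<times> nat \<times> real \<Rightarrow> real"
  assumes f[measurable]: "f \<in> borel_measurable obs_space" and f01: "\<And>z. f z \<in> {0..1}"
  shows "AE \<omega> in P. (\<lambda>n. (1 / real n) * (\<Sum>i<n. f (obs i \<omega>))) \<longlonglongrightarrow> P.expectation (\<lambda>\<omega>. f (obs 0 \<omega>))"
proof (rule P.strong_law_unit_interval)
  show "P.indep_vars (\<lambda>_. borel) (\<lambda>i \<omega>. f (obs i \<omega>)) UNIV"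
    using P.indep_vars_compose2[OF indep, of "\<lambda>_. f"] by (simp add: obs_def[abs_def])
  show "P.expectation (\<lambda>\<omega>. f (obs i \<omega>)) = P.expectation (\<lambda>\<omega>. f (obs 0 \<omega>))" for i
    using integral_distr[OF obs_meas f, of i] integral_distr[OF obs_meas f, of 0] distr_obs[of i]
    by simp
  show "f (obs i \<omega>) \<in> {0..1}" for i \<omega> by (rule f01)
qed

lemma F0_mono: "c \<le> c' \<Longrightarrow> grp_F0 P (X 0) (Y 0) k c \<le> grp_F0 P (X 0) (Y 0) k c'"
  unfolding grp_F0_def using X_meas Y_meas
  by (intro P.finite_measure_mono) auto

lemma F0_meas: "grp_F0 P (X 0) (Y 0) k \<in> borel_measurable borel"
  by (rule borel_measurable_mono) (auto simp: mono_def intro: F0_mono)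

lemma F0_bounds: "0 \<le> grp_F0 P (X 0) (Y 0) k c" "grp_F0 P (X 0) (Y 0) k c \<le> 1"
  unfolding grp_F0_def by auto

abbreviation event_space :: "(real \<times> nat) measure" where
  "event_space \<equiv> borel \<Otimes>\<^sub>M count_space UNIV"

text \<open>Since the inspection time is independent of the event data, their joint law is a product.\<close>
lemma joint_law_product:
  "distr P event_space (\<lambda>\<omega>. (X 0 \<omega>, Y 0 \<omega>)) \<Otimes>\<^sub>M G
     = distr P (event_space \<Otimes>\<^sub>M borel) (\<lambda>\<omega>. ((X 0 \<omega>, Y 0 \<omega>), C 0 \<omega>))"
proof -
  define XY where "XY = (\<lambda>\<omega>. (X 0 \<omega>, Y 0 \<omega>))"
  have XY_meas[measurable]: "XY \<in> measurable P event_space"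
    unfolding XY_def using X_meas Y_meas by measurable
  have [measurable]: "C 0 \<in> borel_measurable P" by (rule C_meas)
  interpret \<mu>: prob_space "distr P event_space XY" by (rule P.prob_space_distr) simp
  have "distr P event_space XY \<Otimes>\<^sub>M G = distr P (event_space \<Otimes>\<^sub>M borel) (\<lambda>\<omega>. (XY \<omega>, C 0 \<omega>))"
  proof (rule pair_measure_eqI)
    show "sigma_finite_measure (distr P event_space XY)" "sigma_finite_measure G" by unfold_locales
    show "sets (distr P event_space XY \<Otimes>\<^sub>M G) = sets (distr P (event_space \<Otimes>\<^sub>M borel) (\<lambda>\<omega>. (XY \<omega>, C 0 \<omega>)))"
      by (simp cong: sets_pair_measure_cong)
    fix A B assume "A \<in> sets (distr P event_space XY)" "B \<in> sets G"
    then have A: "A \<in> sets event_space" and B: "B \<in> sets borel" by auto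
    have indep_AB: "P.prob ((XY -` A \<inter> space P) \<inter> (C 0 -` B \<inter> space P))
                    = P.prob (XY -` A \<inter> space P) * P.prob (C 0 -` B \<inter> space P)"
      using A B by (intro P.indep_setD[OF C_indep[of 0]]) (auto simp: XY_def)
    have "emeasure (distr P event_space XY) A * emeasure G B
            = emeasure P (XY -` A \<inter> space P) * emeasure P (C 0 -` B \<inter> space P)"
      using A B by (simp add: G emeasure_distr)
    also have "\<dots> = emeasure P ((XY -` A \<inter> space P) \<inter> (C 0 -` B \<inter> space P))"
      by (simp add: P.emeasure_eq_measure ennreal_mult indep_AB)
    also have "(XY -` A \<inter> space P) \<inter> (C 0 -` B \<inter> space P) = (\<lambda>\<omega>. (XY \<omega>, C 0 \<omega>)) -` (A \<times> B) \<inter> space P"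
      by auto
    also have "emeasure P \<dots> = emeasure (distr P (event_space \<Otimes>\<^sub>M borel) (\<lambda>\<omega>. (XY \<omega>, C 0 \<omega>))) (A \<times> B)"
      using A B by (subst emeasure_distr) auto
    finally show "emeasure (distr P event_space XY) A * emeasure G B
        = emeasure (distr P (event_space \<Otimes>\<^sub>M borel) (\<lambda>\<omega>. (XY \<omega>, C 0 \<omega>))) (A \<times> B)" .
  qed
  then show ?thesis by (simp add: XY_def)
qed

text \<open>Expected contribution of a failure of type \<open>k\<close> detected in a measurable set \<open>I\<close> of
  inspection times; by Fubini it is the \<open>G\<close>-integral of \<open>F\<^sub>0\<^sub>k\<close> over \<open>I\<close>.\<close>
lemma expectation_failure_in:
  assumes k: "k \<noteq> K + 1" and I[measurable]: "I \<in> sets borel"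
  shows "P.expectation (\<lambda>\<omega>. grp_Delta K k (X 0 \<omega>) (Y 0 \<omega>) (C 0 \<omega>) * indicator I (C 0 \<omega>))
         = (LINT c:I|G. grp_F0 P (X 0) (Y 0) k c)"
proof -
  define \<mu> where "\<mu> = distr P event_space (\<lambda>\<omega>. (X 0 \<omega>, Y 0 \<omega>))"
  have [measurable]: "(\<lambda>\<omega>. (X 0 \<omega>, Y 0 \<omega>)) \<in> measurable P event_space"
    using X_meas Y_meas by measurable
  have [measurable]: "C 0 \<in> borel_measurable P" by (rule C_meas)
  interpret \<mu>: prob_space \<mu> unfolding \<mu>_def by (rule P.prob_space_distr) measurable
  interpret \<mu>G: pair_prob_space \<mu> G ..
  define h :: "real \<times> nat \<Rightarrow> real \<Rightarrow> real"
    where "h xy c = (if fst xy \<le> c \<and> snd xy = k then 1 else 0) * indicator I c" for xy c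
  have h_meas[measurable]: "(\<lambda>(xy, c). h xy c) \<in> borel_measurable (event_space \<Otimes>\<^sub>M borel)"
    unfolding h_def by measurable
  have h_integrable: "integrable (\<mu> \<Otimes>\<^sub>M G) (\<lambda>(xy, c). h xy c)"
  proof (rule \<mu>G.P.integrable_const_bound[where B=1])
    show "AE z in \<mu> \<Otimes>\<^sub>M G. norm (case z of (xy, c) \<Rightarrow> h xy c) \<le> 1"
      by (auto simp: h_def indicator_def split: prod.split)
    show "(\<lambda>(xy, c). h xy c) \<in> borel_measurable (\<mu> \<Otimes>\<^sub>M G)"
      using h_meas by (simp add: \<mu>_def G)
  qed
  have inner: "(\<integral>xy. h xy c \<partial>\<mu>) = indicator I c * grp_F0 P (X 0) (Y 0) k c" for c
  proof -
    have A[measurable]: "{..c} \<times> {k} \<in> sets event_space" by (auto intro!: pair_measureI)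
    have "(\<integral>xy. h xy c \<partial>\<mu>) = (\<integral>xy. indicator I c * indicator ({..c} \<times> {k}) xy \<partial>\<mu>)"
      by (intro Bochner_Integration.integral_cong) (auto simp: h_def indicator_def)
    also have "\<dots> = indicator I c * measure \<mu> ({..c} \<times> {k})"
      by (simp add: \<mu>_def)
    also have "measure \<mu> ({..c} \<times> {k}) = grp_F0 P (X 0) (Y 0) k c"
      unfolding \<mu>_def grp_F0_def by (subst measure_distr) (auto intro!: arg_cong[where f="measure P"])
    finally show ?thesis .
  qed
  have "P.expectation (\<lambda>\<omega>. grp_Delta K k (X 0 \<omega>) (Y 0 \<omega>) (C 0 \<omega>) * indicator I (C 0 \<omega>))
        = P.expectation (\<lambda>\<omega>. (\<lambda>(xy, c). h xy c) ((X 0 \<omega>, Y 0 \<omega>), C 0 \<omega>))"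
    using k by (intro Bochner_Integration.integral_cong) (simp_all add: grp_Delta_def h_def)
  also have "\<dots> = integral\<^sup>L (\<mu> \<Otimes>\<^sub>M G) (\<lambda>(xy, c). h xy c)"
    unfolding \<mu>_def joint_law_product by (rule integral_distr[symmetric]) measurable
  also have "\<dots> = (\<integral>c. (\<integral>xy. h xy c \<partial>\<mu>) \<partial>G)"
    by (rule \<mu>G.integral_snd[OF h_integrable, symmetric])
  also have "\<dots> = (LINT c:I|G. grp_F0 P (X 0) (Y 0) k c)"
    by (simp add: inner set_lebesgue_integral_def)
  finally show ?thesis .
qed

lemma bounded_set_integrable:
  fixes f :: "real \<Rightarrow> real"
  assumes I: "I \<in> sets borel" and f: "f \<in> borel_measurable borel" and bound: "\<And>x. \<bar>f x\<bar> \<le> B"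
  shows "set_integrable G I f"
  unfolding set_integrable_def
proof (rule G.integrable_const_bound[where B=B])
  show "AE x in G. norm (indicator I x *\<^sub>R f x) \<le> B"
    using bound order_trans[OF abs_ge_zero bound] by (auto simp: indicator_def)
  have "(\<lambda>x. indicator I x *\<^sub>R f x) \<in> borel_measurable borel"
    using I f by (intro borel_measurable_scaleR borel_measurable_indicator)
  then show "(\<lambda>x. indicator I x *\<^sub>R f x) \<in> borel_measurable G"
    by (simp add: measurable_cong_sets[OF sets_G refl])
qed

lemma F0_set_integrable: "I \<in> sets borel \<Longrightarrow> set_integrable G I (grp_F0 P (X 0) (Y 0) k)"
  using F0_bounds by (intro bounded_set_integrable[where B=1] F0_meas) auto

lemma const_set_integrable: "I \<in> sets borel \<Longrightarrow> set_integrable G I (\<lambda>_. c :: real)"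
  by (rule bounded_set_integrable[where B="\<bar>c\<bar>"]) auto

lemma cells_ordered:
  assumes I: "I \<in> II" and J: "J \<in> II" and lt: "m I < m J" and c: "c \<in> I" and c': "c' \<in> J"
  shows "c \<le> c'"
proof (rule ccontr)
  assume "\<not> c \<le> c'"
  then have cc: "c' < c" by simp
  have disj: "I \<inter> J = {}" using II_disjoint I J lt unfolding disjoint_def by force
  show False
  proof (cases "c' < m I")
    case True
    then have "m I \<in> J" using II_interval[OF J] c' m_in[OF J] lt
      unfolding is_interval_1 by (meson less_imp_le)
    then show False using m_in[OF I] disj by blast
  next
    case False
    then have "c' \<in> I" using II_interval[OF I] m_in[OF I] c cc
      unfolding is_interval_1 by (meson less_imp_le not_less)
    then show False using c' disj by blast
  qed
qed

text \<open>\<open>H\<^sub>0\<^sub>k\<close> averages the nondecreasing \<open>F\<^sub>0\<^sub>k\<close> over ordered intervals, hence is monotone.\<close>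
lemma H0_mono:
  assumes I: "I \<in> II" and J: "J \<in> II" and le: "m I \<le> m J"
  shows "H0 k I \<le> H0 k J"
proof (cases "I = J")
  case False
  have lt: "m I < m J" using le False inj_onD[OF m_inj _ I J] by force
  define F where "F = grp_F0 P (X 0) (Y 0) k"
  define z where "z = Sup I"
  have bdd: "bdd_above I" using cells_ordered[OF I J lt _ m_in[OF J]] by (auto simp: bdd_above_def)
  have below: "c \<le> z" if "c \<in> I" for c using cSup_upper[OF that bdd] by (simp add: z_def)
  have above: "z \<le> c'" if "c' \<in> J" for c'
    unfolding z_def using cells_ordered[OF I J lt _ that] m_in[OF I] by (intro cSup_least) auto
  have I_sets: "I \<in> sets borel" and J_sets: "J \<in> sets borel" using II_sets I J by auto
  have lower: "(LINT c:I|G. F c) / measure G I \<le> F z"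
  proof -
    have "(LINT c:I|G. F c) \<le> (LINT c:I|G. F z)"
      using F0_set_integrable[OF I_sets] const_set_integrable[OF I_sets] below F0_mono
      by (intro set_integral_mono) (auto simp: F_def)
    also have "\<dots> = measure G I * F z" using I_sets by (simp add: set_integral_const)
    finally show ?thesis using II_pos[OF I] by (simp add: divide_le_eq mult.commute)
  qed
  have upper: "F z \<le> (LINT c:J|G. F c) / measure G J"
  proof -
    have "measure G J * F z = (LINT c:J|G. F z)" using J_sets by (simp add: set_integral_const)
    also have "\<dots> \<le> (LINT c:J|G. F c)"
      using F0_set_integrable[OF J_sets] const_set_integrable[OF J_sets] above F0_mono
      by (intro set_integral_mono) (auto simp: F_def)
    finally show ?thesis using II_pos[OF J] by (simp add: le_divide_eq mult.commute)
  qed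
  from lower upper show ?thesis by (simp add: grp_H0_def F_def)
qed simp

lemma cells_exhaust:
  assumes \<tau>: "0 < \<tau>"
  shows "\<exists>F. finite F \<and> F \<subseteq> II \<and> 1 - \<tau> \<le> (\<Sum>I\<in>F. measure G I)"
proof -
  have ne: "II \<noteq> {}" using II_full by auto
  define f where "f = from_nat_into II"
  have range_f: "range f = II" unfolding f_def by (rule range_from_nat_into[OF ne II_countable])
  define A where "A n = \<Union>(f ` {..<n})" for n
  have "(\<lambda>n. measure G (A n)) \<longlonglongrightarrow> measure G (\<Union>n. A n)"
  proof (rule G.finite_Lim_measure_incseq)
    show "range A \<subseteq> sets G" unfolding A_def using range_f II_sets by (auto intro!: sets.finite_UN)
    show "incseq A" unfolding A_def by (intro incseq_SucI) (auto simp: lessThan_Suc)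
  qed
  moreover have "(\<Union>n. A n) = \<Union>II" unfolding A_def using range_f by auto
  ultimately have "(\<lambda>n. measure G (A n)) \<longlonglongrightarrow> 1" using II_full by simp
  from order_tendstoD(1)[OF this, of "1 - \<tau>"] \<tau>
  obtain n where n: "1 - \<tau> < measure G (A n)" by (auto simp: eventually_sequentially)
  define F where "F = f ` {..<n}"
  have F: "finite F" "F \<subseteq> II" using range_f by (auto simp: F_def)
  have "measure G (A n) = (\<Sum>I\<in>F. measure G I)"
    unfolding A_def F_def[symmetric]
  proof (rule measure_Union')
    show "pairwise disjnt F"
      using II_disjoint F unfolding pairwise_def disjoint_def disjnt_def by blast
  qed (use F II_sets in \<open>auto simp: G.fmeasurable_eq_sets\<close>)
  then show ?thesis using F n by (intro exI[of _ F]) auto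
qed

end

lemma Delta_nonneg: "0 \<le> grp_Delta K k x y c"
  by (simp add: grp_Delta_def)

lemma Delta_failures_sum: "(\<Sum>k=1..K. grp_Delta K k x y c) = (if x \<le> c \<and> y \<in> {1..K} then 1 else 0)"
proof -
  have "(\<Sum>k=1..K. grp_Delta K k x y c) = (\<Sum>k=1..K. if y = k then (if x \<le> c then 1 else 0) else 0)"
    by (intro sum.cong refl) (auto simp: grp_Delta_def)
  then show ?thesis by (simp add: sum.delta)
qed

lemma Delta_sum: "y \<in> {1..K} \<Longrightarrow> (\<Sum>k=1..K+1. grp_Delta K k x y c) = 1"
  using Delta_failures_sum[of K x y c] by (simp add: grp_Delta_def)

lemma M_nonneg: "0 \<le> grp_M K II m X Y C k n \<omega> I"
  unfolding grp_M_def by (intro mult_nonneg_nonneg sum_nonneg) (auto simp: Delta_nonneg)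

lemma Hext_sum: "(\<Sum>k=1..K+1. grp_Hext K H k I) = 1"
proof -
  have "(\<Sum>k=1..K. grp_Hext K H k I) = (\<Sum>k=1..K. H k I)"
    by (intro sum.cong refl) (auto simp: grp_Hext_def)
  then show ?thesis by (simp add: grp_Hext_def)
qed

lemma Hext_nonneg: "H \<in> grp_class K II m \<Longrightarrow> I \<in> II \<Longrightarrow> k \<in> {1..K+1} \<Longrightarrow> 0 \<le> grp_Hext K H k I"
  by (auto simp: grp_class_def grp_Hext_def)

lemma Hext_mixture:
  "grp_Hext K (\<lambda>k I. (1 - \<epsilon>) * H k I + \<epsilon> / real (K + 1)) k I
     = (1 - \<epsilon>) * grp_Hext K H k I + \<epsilon> / real (card {1..K+1})"
proof (cases "k = K + 1")
  case True
  have "(\<Sum>j=1..K. (1 - \<epsilon>) * H j I + \<epsilon> / real (K + 1))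
      = (1 - \<epsilon>) * (\<Sum>j=1..K. H j I) + real K * (\<epsilon> / real (K + 1))"
    by (simp add: sum.distrib sum_distrib_left)
  moreover have "real K * (\<epsilon> / real (K + 1)) = \<epsilon> - \<epsilon> / real (K + 1)"
    by (simp add: field_simps)
  ultimately show ?thesis using True by (simp add: grp_Hext_def algebra_simps)
qed (simp add: grp_Hext_def)

lemma grp_class_mixture:
  assumes H: "H \<in> grp_class K II m" and \<epsilon>: "0 \<le> \<epsilon>" "\<epsilon> \<le> 1"
  shows "(\<lambda>k I. (1 - \<epsilon>) * H k I + \<epsilon> / real (K + 1)) \<in> grp_class K II m"
  unfolding grp_class_def
proof (intro CollectI conjI ballI impI)
  fix k I assume "k \<in> {1..K}" "I \<in> II"
  then show "0 \<le> (1 - \<epsilon>) * H k I + \<epsilon> / real (K + 1)" using H \<epsilon> by (simp add: grp_class_def)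
next
  fix k I J assume "k \<in> {1..K}" "I \<in> II" "J \<in> II" "m I \<le> m J"
  then show "(1 - \<epsilon>) * H k I + \<epsilon> / real (K + 1) \<le> (1 - \<epsilon>) * H k J + \<epsilon> / real (K + 1)"
    using H \<epsilon> by (simp add: grp_class_def mult_left_mono)
next
  fix I assume I: "I \<in> II"
  have "(\<Sum>k=1..K. (1 - \<epsilon>) * H k I + \<epsilon> / real (K + 1))
        = (1 - \<epsilon>) * (\<Sum>k=1..K. H k I) + \<epsilon> * (real K / real (K + 1))"
    by (simp add: sum.distrib sum_distrib_left)
  also have "\<dots> \<le> (1 - \<epsilon>) * 1 + \<epsilon> * 1"
    using H I \<epsilon> by (intro add_mono mult_left_mono) (auto simp: grp_class_def)
  finally show "(\<Sum>k=1..K. (1 - \<epsilon>) * H k I + \<epsilon> / real (K + 1)) \<le> 1" by simp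
qed

lemma grp_class_component:
  assumes "H \<in> grp_class K II m" "k \<in> {1..K}"
  shows "(\<lambda>_. H k) \<in> grp_class 1 II m"
proof -
  have "H k I \<le> 1" if "I \<in> II" for I
    using assms that member_le_sum[of k "{1..K}" "\<lambda>k. H k I"] by (force simp: grp_class_def)
  then show ?thesis using assms by (auto simp: grp_class_def)
qed

lemma grp_class_one_bounds: "(\<lambda>_. h) \<in> grp_class 1 II m \<Longrightarrow> I \<in> II \<Longrightarrow> 0 \<le> h I \<and> h I \<le> 1"
  by (simp add: grp_class_def)

context grouped_model
begin

definition cell_indicator :: "nat \<Rightarrow> real set \<Rightarrow> real \<times> nat \<times> real \<Rightarrow> real" where
  "cell_indicator k I z = grp_Delta K k (fst z) (fst (snd z)) (snd (snd z)) * indicator I (snd (snd z))"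

lemma cell_indicator_meas[measurable]:
  assumes [measurable]: "I \<in> sets borel"
  shows "cell_indicator k I \<in> borel_measurable obs_space"
proof -
  have "cell_indicator k I = (\<lambda>z. (if k = K + 1 then (if fst z > snd (snd z) then 1 else 0)
          else (if fst z \<le> snd (snd z) \<and> fst (snd z) = k then 1 else 0)) * indicator I (snd (snd z)))"
    by (auto simp: cell_indicator_def grp_Delta_def fun_eq_iff)
  then show ?thesis by simp
qed

lemma cell_indicator_01: "cell_indicator k I z \<in> {0..1}"
  by (auto simp: cell_indicator_def grp_Delta_def indicator_def)

lemma integrable_obs:
  fixes f :: "real \<times> nat \<times> real \<Rightarrow> real"
  assumes "f \<in> borel_measurable obs_space" "\<And>z. f z \<in> {0..1}"
  shows "integrable P (\<lambda>\<omega>. f (obs 0 \<omega>))"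
  using assms by (intro P.integrable_const_bound[where B=1]) auto

lemma expectation_cell:
  assumes k: "k \<in> {1..K}" and I: "I \<in> II"
  shows "P.expectation (\<lambda>\<omega>. cell_indicator k I (obs 0 \<omega>)) = measure G I * H0 k I"
  using expectation_failure_in[of k I] II_sets[OF I] II_pos[OF I] k
  by (simp add: cell_indicator_def obs_def grp_H0_def)

lemma expectation_in_cell:
  assumes "I \<in> sets borel"
  shows "P.expectation (\<lambda>\<omega>. indicator I (C 0 \<omega>)) = measure G I"
proof -
  have "integral\<^sup>L G (indicator I :: real \<Rightarrow> real) = P.expectation (\<lambda>\<omega>. indicator I (C 0 \<omega>))"
    unfolding G by (rule integral_distr[OF C_meas[of 0]]) (use assms in simp)
  then show ?thesis using assms by simp
qed

lemma H0_nonneg: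
  assumes "I \<in> II" "k \<in> {1..K}"
  shows "0 \<le> H0 k I"
proof -
  have "0 \<le> P.expectation (\<lambda>\<omega>. cell_indicator k I (obs 0 \<omega>))"
    using cell_indicator_01 by (intro Bochner_Integration.integral_nonneg) auto
  then show ?thesis using expectation_cell[OF assms(2,1)] II_pos[OF assms(1)]
    by (simp add: zero_le_mult_iff)
qed

lemma H0_failures_sum_le_1:
  assumes I: "I \<in> II"
  shows "(\<Sum>k=1..K. H0 k I) \<le> 1"
proof -
  have [measurable]: "I \<in> sets borel" by (rule II_sets[OF I])
  have "measure G I * (\<Sum>k=1..K. H0 k I)
        = (\<Sum>k=1..K. P.expectation (\<lambda>\<omega>. cell_indicator k I (obs 0 \<omega>)))"
    using expectation_cell I by (simp add: sum_distrib_left)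
  also have "\<dots> = P.expectation (\<lambda>\<omega>. \<Sum>k=1..K. cell_indicator k I (obs 0 \<omega>))"
    by (intro Bochner_Integration.integral_sum[symmetric] integrable_obs cell_indicator_01) measurable
  also have "\<dots> \<le> P.expectation (\<lambda>\<omega>. indicator I (C 0 \<omega>))"
  proof (intro integral_mono integrable_obs)
    show "(\<lambda>z. \<Sum>k=1..K. cell_indicator k I z) \<in> borel_measurable obs_space" by measurable
    show "(\<Sum>k=1..K. cell_indicator k I z) \<in> {0..1}" for z
      unfolding cell_indicator_def sum_distrib_right[symmetric] Delta_failures_sum by simp
    show "integrable P (\<lambda>\<omega>. indicator I (C 0 \<omega>) :: real)"
      using C_meas by (intro P.integrable_const_bound[where B=1]) auto
    show "(\<Sum>k=1..K. cell_indicator k I (obs 0 \<omega>)) \<le> indicator I (C 0 \<omega>)" for \<omega>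
      unfolding cell_indicator_def sum_distrib_right[symmetric] Delta_failures_sum
      by (simp add: obs_def indicator_def)
  qed
  also have "\<dots> = measure G I" by (simp add: expectation_in_cell)
  finally show ?thesis using II_pos[OF I] by simp
qed

lemma H0_in_class: "(\<lambda>k I. H0 k I) \<in> grp_class K II m"
  unfolding grp_class_def using H0_nonneg H0_mono H0_failures_sum_le_1 by auto

text \<open>Each observation falls into exactly one category, so \<open>M(I)\<close> is the proportion of
  inspection times grouped into \<open>I\<close>.\<close>
lemma Mtot_eq_count:
  assumes \<omega>: "\<omega> \<in> space P"
  shows "grp_Mtot K II m X Y C n \<omega> I = (1 / real n) * (\<Sum>i<n. if grp_D II m (C i \<omega>) = m I then 1 else 0)"
proof -
  have "grp_Mtot K II m X Y C n \<omega> I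
     = (1 / real n) * (\<Sum>i<n. (\<Sum>k=1..K+1. grp_Delta K k (X i \<omega>) (Y i \<omega>) (C i \<omega>))
                              * (if grp_D II m (C i \<omega>) = m I then 1 else 0))"
    unfolding grp_Mtot_def grp_M_def sum_distrib_left[symmetric] sum_distrib_right
    by (subst sum.swap) simp
  then show ?thesis using Delta_sum[OF Y_range[OF \<omega>]] by simp
qed

lemma Mtot_mass_le_1:
  assumes \<omega>: "\<omega> \<in> space P" and F: "finite F" "F \<subseteq> II"
  shows "(\<Sum>I\<in>F. grp_Mtot K II m X Y C n \<omega> I) \<le> 1"
proof -
  have at_most_one: "(\<Sum>I\<in>F. if d = m I then 1 else 0 :: real) \<le> 1" for d
  proof -
    have "\<forall>I\<in>{I\<in>F. d = m I}. \<forall>J\<in>{I\<in>F. d = m I}. I = J"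
      using F inj_onD[OF m_inj] by auto
    then have "card {I\<in>F. d = m I} \<le> Suc 0"
      using F by (subst card_le_Suc0_iff_eq) auto
    then show ?thesis using F by (simp add: sum.If_cases Int_def)
  qed
  have "(\<Sum>I\<in>F. grp_Mtot K II m X Y C n \<omega> I)
        = (1 / real n) * (\<Sum>i<n. \<Sum>I\<in>F. if grp_D II m (C i \<omega>) = m I then 1 else 0)"
    unfolding Mtot_eq_count[OF \<omega>] sum_distrib_left[symmetric] by (subst sum.swap) simp
  also have "\<dots> \<le> (1 / real n) * (\<Sum>i<n. 1)"
    using at_most_one by (intro mult_left_mono sum_mono) auto
  also have "\<dots> \<le> 1" by (cases "n = 0") auto
  finally show ?thesis .
qed

text \<open>Only the finitely many cells containing an observed inspection time have positive frequency.\<close>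
lemma support_finite: "finite {I\<in>II. grp_Mtot K II m X Y C n \<omega> I \<noteq> 0}"
proof (rule finite_subset)
  show "{I\<in>II. grp_Mtot K II m X Y C n \<omega> I \<noteq> 0} \<subseteq> m -` ((\<lambda>i. grp_D II m (C i \<omega>)) ` {..<n}) \<inter> II"
  proof (intro subsetI IntI vimageI2)
    fix I assume "I \<in> {I\<in>II. grp_Mtot K II m X Y C n \<omega> I \<noteq> 0}"
    then have nonzero: "grp_Mtot K II m X Y C n \<omega> I \<noteq> 0" by auto
    have "\<exists>i<n. grp_D II m (C i \<omega>) = m I"
    proof (rule ccontr)
      assume "\<not> (\<exists>i<n. grp_D II m (C i \<omega>) = m I)"
      then have "grp_Mtot K II m X Y C n \<omega> I = 0" unfolding grp_Mtot_def grp_M_def by simp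
      with nonzero show False by simp
    qed
    then show "m I \<in> (\<lambda>i. grp_D II m (C i \<omega>)) ` {..<n}" by force
  qed auto
  show "finite (m -` ((\<lambda>i. grp_D II m (C i \<omega>)) ` {..<n}) \<inter> II)"
    by (intro finite_vimage_IntI m_inj) simp
qed

lemma AE_frequency_limits:
  "AE \<omega> in P. (\<forall>I\<in>II. \<forall>k\<in>{1..K}.
      (\<lambda>n. grp_M K II m X Y C k n \<omega> I) \<longlonglongrightarrow> measure G I * H0 k I)
    \<and> (\<forall>I\<in>II. (\<lambda>n. grp_Mtot K II m X Y C n \<omega> I) \<longlonglongrightarrow> measure G I)"
proof -
  have cells: "AE \<omega> in P. \<forall>I\<in>II. \<forall>k\<in>{1..K}. (\<lambda>n. (1 / real n) * (\<Sum>i<n. cell_indicator k I (obs i \<omega>)))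
                 \<longlonglongrightarrow> measure G I * H0 k I"
  proof (rule AE_ball_countable'[OF _ II_countable], rule AE_ball_countable'[OF _ countable_finite])
    fix I k assume I: "I \<in> II" and k: "k \<in> {1..K}"
    from strong_law_obs[OF cell_indicator_meas[OF II_sets[OF I]] cell_indicator_01, of k]
    show "AE \<omega> in P. (\<lambda>n. (1 / real n) * (\<Sum>i<n. cell_indicator k I (obs i \<omega>)))
            \<longlonglongrightarrow> measure G I * H0 k I"
      by (simp only: expectation_cell[OF k I])
  qed simp
  have totals: "AE \<omega> in P. \<forall>I\<in>II. (\<lambda>n. (1 / real n) * (\<Sum>i<n. indicator I (C i \<omega>))) \<longlonglongrightarrow> measure G I"
  proof (rule AE_ball_countable'[OF _ II_countable])
    fix I assume I: "I \<in> II"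
    then have [measurable]: "I \<in> sets borel" by (rule II_sets)
    have "(\<lambda>z::real \<times> nat \<times> real. indicator I (snd (snd z)) :: real) \<in> borel_measurable obs_space"
      by measurable
    from strong_law_obs[OF this] expectation_in_cell
    show "AE \<omega> in P. (\<lambda>n. (1 / real n) * (\<Sum>i<n. indicator I (C i \<omega>))) \<longlonglongrightarrow> measure G I"
      by (simp add: obs_def indicator_def)
  qed
  from AE_space AE_C_in_cells cells totals show ?thesis
  proof (eventually_elim, intro conjI ballI)
    case (elim \<omega>)
    have grouping: "grp_D II m (C i \<omega>) = m I \<longleftrightarrow> C i \<omega> \<in> I" if "I \<in> II" for i I
      using elim(2) D_eq_iff that by blast
    fix I assume I: "I \<in> II"
    {
      fix k assume "k \<in> {1..K}"
      have "grp_M K II m X Y C k n \<omega> I = (1 / real n) * (\<Sum>i<n. cell_indicator k I (obs i \<omega>))" for n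
        unfolding grp_M_def cell_indicator_def obs_def
        by (intro arg_cong2[where f="(*)"] sum.cong refl) (simp_all add: grouping[OF I] split: split_indicator)
      then show "(\<lambda>n. grp_M K II m X Y C k n \<omega> I) \<longlonglongrightarrow> measure G I * H0 k I"
        using elim(3) I \<open>k \<in> {1..K}\<close> by simp
    }
    have "grp_Mtot K II m X Y C n \<omega> I = (1 / real n) * (\<Sum>i<n. indicator I (C i \<omega>))" for n
      unfolding Mtot_eq_count[OF elim(1)]
      by (intro arg_cong2[where f="(*)"] sum.cong refl) (simp_all add: grouping[OF I] split: split_indicator)
    then show "(\<lambda>n. grp_Mtot K II m X Y C n \<omega> I) \<longlonglongrightarrow> measure G I"
      using elim(4) I by simp
  qed
qed


lemma survival_frequency_tendsto:
  assumes lim_M: "\<forall>k\<in>{1..K}. (\<lambda>n. grp_M K II m X Y C k n \<omega> I) \<longlonglongrightarrow> measure G I * H0 k I"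
    and lim_Mtot: "(\<lambda>n. grp_Mtot K II m X Y C n \<omega> I) \<longlonglongrightarrow> measure G I"
  shows "(\<lambda>n. grp_M K II m X Y C (K + 1) n \<omega> I) \<longlonglongrightarrow> measure G I * grp_Hext K H0 (K + 1) I"
proof -
  have "(\<lambda>n. grp_Mtot K II m X Y C n \<omega> I - (\<Sum>k=1..K. grp_M K II m X Y C k n \<omega> I))
          \<longlonglongrightarrow> measure G I - (\<Sum>k=1..K. measure G I * H0 k I)"
    using lim_M lim_Mtot by (intro tendsto_diff tendsto_sum) auto
  then show ?thesis
    by (simp add: grp_Mtot_def grp_Hext_def sum_distrib_left right_diff_distrib)
qed

text \<open>Pathwise consistency of the maximum likelihood estimator: along any sample path on which
  the cell frequencies converge, the estimator extended by the survival category satisfies the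
  hypotheses of the locale \<open>cell_fit\<close>.\<close>
lemma mle_consistent:
  fixes Hhat :: "nat \<Rightarrow> nat \<Rightarrow> real set \<Rightarrow> real"
  assumes \<omega>: "\<omega> \<in> space P"
    and lim_M: "\<forall>I\<in>II. \<forall>k\<in>{1..K}. (\<lambda>n. grp_M K II m X Y C k n \<omega> I) \<longlonglongrightarrow> measure G I * H0 k I"
    and lim_Mtot: "\<forall>I\<in>II. (\<lambda>n. grp_Mtot K II m X Y C n \<omega> I) \<longlonglongrightarrow> measure G I"
    and mle: "\<And>n. Hhat n \<in> grp_class K II m \<and>
         (\<forall>H\<in>grp_class K II m. grp_loglik K II m X Y C n \<omega> H \<le> grp_loglik K II m X Y C n \<omega> (Hhat n))"
    and I: "I \<in> II" and k: "k \<in> {1..K}"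
  shows "(\<lambda>n. Hhat n k I) \<longlonglongrightarrow> H0 k I"
proof -
  interpret fit: cell_fit II "{1..K+1}" "\<lambda>n I k. grp_M K II m X Y C k n \<omega> I" "\<lambda>I. measure G I"
    "\<lambda>I k. grp_Hext K H0 k I" "\<lambda>n I k. grp_Hext K (Hhat n) k I"
  proof unfold_locales
    show "finite {I\<in>II. (\<Sum>k\<in>{1..K+1}. grp_M K II m X Y C k n \<omega> I) \<noteq> 0}" for n
      using support_finite by (simp add: grp_Mtot_def)
    show "(\<Sum>I\<in>F. \<Sum>k\<in>{1..K+1}. grp_M K II m X Y C k n \<omega> I) \<le> 1" if "finite F" "F \<subseteq> II" for n F
      using Mtot_mass_le_1[OF \<omega> that] by (simp add: grp_Mtot_def)
    show "(\<lambda>n. grp_M K II m X Y C k n \<omega> I) \<longlonglongrightarrow> measure G I * grp_Hext K H0 k I"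
      if "I \<in> II" "k \<in> {1..K+1}" for I k
      using that lim_M lim_Mtot survival_frequency_tendsto[where I=I and \<omega>=\<omega>]
      by (cases "k = K + 1") (auto simp: grp_Hext_def)
    show "0 \<le> grp_Hext K H0 k I" if "I \<in> II" "k \<in> {1..K+1}" for I k
      using Hext_nonneg[OF H0_in_class that] .
    show "0 \<le> grp_Hext K (Hhat n) k I" if "I \<in> II" "k \<in> {1..K+1}" for n I k
      using Hext_nonneg[OF _ that] mle by blast
    show "(\<Sum>I\<in>{I\<in>II. (\<Sum>k\<in>{1..K+1}. grp_M K II m X Y C k n \<omega> I) \<noteq> 0}.
             \<Sum>k\<in>{1..K+1}. xlog (grp_M K II m X Y C k n \<omega> I)
                             ((1 - \<epsilon>) * grp_Hext K H0 k I + \<epsilon> / real (card {1..K+1})))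
          \<le> (\<Sum>I\<in>{I\<in>II. (\<Sum>k\<in>{1..K+1}. grp_M K II m X Y C k n \<omega> I) \<noteq> 0}.
             \<Sum>k\<in>{1..K+1}. xlog (grp_M K II m X Y C k n \<omega> I) (grp_Hext K (Hhat n) k I))"
      if "0 < \<epsilon>" "\<epsilon> < 1" for n \<epsilon>
    proof -
      have "(\<lambda>k I. (1 - \<epsilon>) * H0 k I + \<epsilon> / real (K + 1)) \<in> grp_class K II m"
        using grp_class_mixture[OF H0_in_class] that by simp
      with mle have "grp_loglik K II m X Y C n \<omega> (\<lambda>k I. (1 - \<epsilon>) * H0 k I + \<epsilon> / real (K + 1))
                       \<le> grp_loglik K II m X Y C n \<omega> (Hhat n)" by blast
      then show ?thesis unfolding grp_loglik_def grp_Mtot_def Hext_mixture .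
    qed
  qed (use II_pos cells_exhaust Hext_sum M_nonneg in auto)
  show ?thesis
    using fit.phat_tendsto[OF I, of k] k by (simp add: grp_Hext_def)
qed

text \<open>The naive estimator of component \<open>k\<close> only distinguishes failure of type \<open>k\<close> (\<open>True\<close>)
  from everything else (\<open>False\<close>).\<close>
definition binary_freq :: "nat \<Rightarrow> nat \<Rightarrow> 'a \<Rightarrow> real set \<Rightarrow> bool \<Rightarrow> real" where
  "binary_freq k n \<omega> I b =
     (if b then grp_M K II m X Y C k n \<omega> I
      else grp_Mtot K II m X Y C n \<omega> I - grp_M K II m X Y C k n \<omega> I)"

lemma binary_freq_total: "(\<Sum>b\<in>UNIV. binary_freq k n \<omega> I b) = grp_Mtot K II m X Y C n \<omega> I"
  by (simp add: UNIV_bool binary_freq_def)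

lemma loglik_naive_binary:
  "grp_loglik_naive K II m X Y C k n \<omega> h =
     (\<Sum>I\<in>{I\<in>II. (\<Sum>b\<in>UNIV. binary_freq k n \<omega> I b) \<noteq> 0}.
        \<Sum>b\<in>UNIV. xlog (binary_freq k n \<omega> I b) (if b then h I else 1 - h I))"
  unfolding grp_loglik_naive_def binary_freq_total
  by (intro sum.cong refl) (simp add: UNIV_bool binary_freq_def add.commute)

lemma M_le_Mtot: "k \<in> {1..K} \<Longrightarrow> grp_M K II m X Y C k n \<omega> I \<le> grp_Mtot K II m X Y C n \<omega> I"
  unfolding grp_Mtot_def using M_nonneg by (intro member_le_sum) auto

text \<open>Pathwise consistency of the naive estimator, again an instance of \<open>cell_fit\<close>, now with
  two categories per interval.\<close>
lemma naive_consistent: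
  fixes Htil :: "nat \<Rightarrow> real set \<Rightarrow> real"
  assumes \<omega>: "\<omega> \<in> space P" and k: "k \<in> {1..K}"
    and lim_M: "\<forall>I\<in>II. (\<lambda>n. grp_M K II m X Y C k n \<omega> I) \<longlonglongrightarrow> measure G I * H0 k I"
    and lim_Mtot: "\<forall>I\<in>II. (\<lambda>n. grp_Mtot K II m X Y C n \<omega> I) \<longlonglongrightarrow> measure G I"
    and naive: "\<And>n. (\<lambda>_. Htil n) \<in> grp_class 1 II m \<and>
         (\<forall>h. (\<lambda>_. h) \<in> grp_class 1 II m \<longrightarrow>
              grp_loglik_naive K II m X Y C k n \<omega> h \<le> grp_loglik_naive K II m X Y C k n \<omega> (Htil n))"
    and I: "I \<in> II"
  shows "(\<lambda>n. Htil n I) \<longlonglongrightarrow> H0 k I"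
proof -
  have H0_class: "(\<lambda>_. H0 k) \<in> grp_class 1 II m"
    by (rule grp_class_component[OF H0_in_class k])
  interpret fit: cell_fit II "UNIV :: bool set" "\<lambda>n. binary_freq k n \<omega>" "\<lambda>I. measure G I"
    "\<lambda>I b. if b then H0 k I else 1 - H0 k I" "\<lambda>n I b. if b then Htil n I else 1 - Htil n I"
  proof unfold_locales
    show "finite {I\<in>II. (\<Sum>b\<in>UNIV. binary_freq k n \<omega> I b) \<noteq> 0}" for n
      using support_finite by (simp add: binary_freq_total)
    show "0 \<le> binary_freq k n \<omega> I b" for n I b
      using M_nonneg[of K II m X Y C k n \<omega> I] M_le_Mtot[OF k, of n \<omega> I]
      by (simp add: binary_freq_def)
    show "(\<Sum>I\<in>F. \<Sum>b\<in>UNIV. binary_freq k n \<omega> I b) \<le> 1" if "finite F" "F \<subseteq> II" for n F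
      using Mtot_mass_le_1[OF \<omega> that] by (simp add: binary_freq_total)
    show "(\<lambda>n. binary_freq k n \<omega> I b) \<longlonglongrightarrow> measure G I * (if b then H0 k I else 1 - H0 k I)"
      if "I \<in> II" for I b
      using that lim_M lim_Mtot
      by (cases b) (auto simp: binary_freq_def right_diff_distrib intro!: tendsto_diff)
    show "0 \<le> (if b then H0 k I else 1 - H0 k I)" if "I \<in> II" for I b
      using grp_class_one_bounds[OF H0_class that] by simp
    show "0 \<le> (if b then Htil n I else 1 - Htil n I)" if "I \<in> II" for n I b
      using grp_class_one_bounds[OF conjunct1[OF naive[of n]] that] by simp
    show "(\<Sum>I\<in>{I\<in>II. (\<Sum>b\<in>UNIV. binary_freq k n \<omega> I b) \<noteq> 0}. \<Sum>b\<in>UNIV.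
             xlog (binary_freq k n \<omega> I b) ((1 - \<epsilon>) * (if b then H0 k I else 1 - H0 k I) + \<epsilon> / real (card (UNIV :: bool set))))
          \<le> (\<Sum>I\<in>{I\<in>II. (\<Sum>b\<in>UNIV. binary_freq k n \<omega> I b) \<noteq> 0}. \<Sum>b\<in>UNIV.
             xlog (binary_freq k n \<omega> I b) (if b then Htil n I else 1 - Htil n I))"
      if "0 < \<epsilon>" "\<epsilon> < 1" for n \<epsilon>
    proof -
      define h where "h = (\<lambda>I. (1 - \<epsilon>) * H0 k I + \<epsilon> / real (1 + 1))"
      have "(\<lambda>_. h) \<in> grp_class 1 II m"
        using grp_class_mixture[OF H0_class] that by (simp add: h_def)
      with naive have "grp_loglik_naive K II m X Y C k n \<omega> h \<le> grp_loglik_naive K II m X Y C k n \<omega> (Htil n)"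
        by blast
      moreover have "(if b then h I else 1 - h I)
          = (1 - \<epsilon>) * (if b then H0 k I else 1 - H0 k I) + \<epsilon> / real (card (UNIV :: bool set))" for b I
        by (simp add: h_def algebra_simps)
      ultimately show ?thesis unfolding loglik_naive_binary by simp
    qed
  qed (use II_pos cells_exhaust in \<open>auto simp: UNIV_bool\<close>)
  show ?thesis using fit.phat_tendsto[OF I, of True] by simp
qed

end


theorem theorem2:
  fixes P :: "'a measure" and K :: nat
    and X :: "nat \<Rightarrow> 'a \<Rightarrow> real" and Y :: "nat \<Rightarrow> 'a \<Rightarrow> nat" and C :: "nat \<Rightarrow> 'a \<Rightarrow> real"
    and G :: "real measure"
    and II :: "real set set" and m :: "real set \<Rightarrow> real"
    and Hhat :: "nat \<Rightarrow> 'a \<Rightarrow> nat \<Rightarrow> real set \<Rightarrow> real"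
    and Htil :: "nat \<Rightarrow> 'a \<Rightarrow> nat \<Rightarrow> real set \<Rightarrow> real"
  assumes P: "prob_space P"
    and K: "K \<ge> 1"
    and X_meas: "\<And>i. X i \<in> borel_measurable P"
    and Y_meas: "\<And>i. Y i \<in> measurable P (count_space UNIV)"
    and C_meas: "\<And>i. C i \<in> borel_measurable P"
    and Y_range: "\<And>i \<omega>. \<omega> \<in> space P \<Longrightarrow> Y i \<omega> \<in> {1..K}"
    and indep: "prob_space.indep_vars P (\<lambda>_. borel \<Otimes>\<^sub>M count_space UNIV \<Otimes>\<^sub>M borel)
                  (\<lambda>i \<omega>. (X i \<omega>, Y i \<omega>, C i \<omega>)) UNIV"
    and ident: "\<And>i. distr P (borel \<Otimes>\<^sub>M count_space UNIV \<Otimes>\<^sub>M borel) (\<lambda>\<omega>. (X i \<omega>, Y i \<omega>, C i \<omega>))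
                   = distr P (borel \<Otimes>\<^sub>M count_space UNIV \<Otimes>\<^sub>M borel) (\<lambda>\<omega>. (X 0 \<omega>, Y 0 \<omega>, C 0 \<omega>))"
    and C_indep: "\<And>i. prob_space.indep_set P
           {(\<lambda>\<omega>. (X i \<omega>, Y i \<omega>)) -` A \<inter> space P | A. A \<in> sets (borel \<Otimes>\<^sub>M count_space UNIV)}
           {C i -` B \<inter> space P | B. B \<in> sets borel}"
    and G: "G = distr P borel (C 0)"
    and II_countable: "countable II"
    and II_interval: "\<And>I. I \<in> II \<Longrightarrow> is_interval I"
    and II_disjoint: "disjoint II"
    and II_pos: "\<And>I. I \<in> II \<Longrightarrow> measure G I > 0"
    and II_full: "measure G (\<Union>II) = 1"
    and m_in: "\<And>I. I \<in> II \<Longrightarrow> m I \<in> I"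
    and m_inj: "inj_on m II"
    and Hhat_mle: "\<And>n \<omega>. \<omega> \<in> space P \<Longrightarrow>
         Hhat n \<omega> \<in> grp_class K II m \<and>
         (\<forall>H\<in>grp_class K II m. grp_loglik K II m X Y C n \<omega> H \<le> grp_loglik K II m X Y C n \<omega> (Hhat n \<omega>))"
    and Htil_naive: "\<And>n \<omega> k. \<omega> \<in> space P \<Longrightarrow> k \<in> {1..K} \<Longrightarrow>
         (\<lambda>_. Htil n \<omega> k) \<in> grp_class 1 II m \<and>
         (\<forall>h. (\<lambda>_. h) \<in> grp_class 1 II m \<longrightarrow>
              grp_loglik_naive K II m X Y C k n \<omega> h \<le> grp_loglik_naive K II m X Y C k n \<omega> (Htil n \<omega> k))"
  shows "(AE \<omega> in P. \<forall>I\<in>II. \<forall>k\<in>{1..K}.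
            (\<lambda>n. Hhat n \<omega> k I) \<longlonglongrightarrow> grp_H0 P (X 0) (Y 0) G k I)
       \<and> (AE \<omega> in P. \<forall>I\<in>II. \<forall>k\<in>{1..K}.
            (\<lambda>n. Htil n \<omega> k I) \<longlonglongrightarrow> grp_H0 P (X 0) (Y 0) G k I)"
proof -
  interpret grouped_model P K X Y C G II m
    by (rule grouped_model.intro) (fact assms)+
  from AE_space AE_frequency_limits
  have "AE \<omega> in P. (\<forall>I\<in>II. \<forall>k\<in>{1..K}. (\<lambda>n. Hhat n \<omega> k I) \<longlonglongrightarrow> H0 k I)
                  \<and> (\<forall>I\<in>II. \<forall>k\<in>{1..K}. (\<lambda>n. Htil n \<omega> k I) \<longlonglongrightarrow> H0 k I)"
  proof eventually_elim
    case (elim \<omega>)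
    then have \<omega>: "\<omega> \<in> space P"
      and lim_M: "\<forall>I\<in>II. \<forall>k\<in>{1..K}. (\<lambda>n. grp_M K II m X Y C k n \<omega> I) \<longlonglongrightarrow> measure G I * H0 k I"
      and lim_Mtot: "\<forall>I\<in>II. (\<lambda>n. grp_Mtot K II m X Y C n \<omega> I) \<longlonglongrightarrow> measure G I"
      by blast+
    have "(\<lambda>n. Hhat n \<omega> k I) \<longlonglongrightarrow> H0 k I" if "I \<in> II" "k \<in> {1..K}" for I k
      using mle_consistent[OF \<omega> lim_M lim_Mtot Hhat_mle[OF \<omega>] that] .
    moreover have "(\<lambda>n. Htil n \<omega> k I) \<longlonglongrightarrow> H0 k I" if "I \<in> II" "k \<in> {1..K}" for I k
      using naive_consistent[OF \<omega> that(2) _ lim_Mtot Htil_naive[OF \<omega> that(2)] that(1)] lim_M that(2)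
      by blast
    ultimately show ?case by blast
  qed
  then show ?thesis by (simp only: AE_conj_iff)
qed

end
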